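(* Let $S$ be a random walk on $\mathbb{Z}^2$ with symmetric, sub-Gaussian increments and $\mathsf c$ as in the context. For any $h\ge2$, $t\ge0$, $L\in\mathbb{N}$, $f:\mathbb{Z}^2\to\mathbb{R}$ and $p\in(1,\infty)$, with $\mathscr C:=\mathsf c\,e^{2\mathsf ct^2L}$, $$\max_{I\ne*}\Big\|\widehat{\mathsf q}^{|f|,I}_L\tfrac1{\mathcal W_t}\Big\|_{\ell^p}\le4\,\mathscr C^hL\,\Big\|\frac f{w_t}\Big\|_{\ell^\infty}\Big\|\frac f{w_t}\Big\|_{\ell^p}^{h-1},$$ and more generally, for any $r\in[1,\infty]$, $$\max_{I\ne*}\Big\|\widehat{\mathsf q}^{|f|,I}_L\tfrac1{\mathcal W_t}\Big\|_{\ell^p}\le4\,\mathscr C^h\min\{\tfrac r{r-1},\tfrac p{p-1}\}\,L^{1-\frac1r}\Big\|\frac f{w_t}\Big\|_{\ell^r}\Big\|\frac f{w_t}\Big\|_{\ell^p}^{h-1},$$ with the conventions $\frac10:=\infty$, $\frac\infty{\infty-1}:=1$.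
   Context: Walk assumption: $q_1(x)=q_1(-x)$ and $\exists c>0$ with $\sum_xe^{tx^a}q_1(x)\le e^{ct^2/2}$ for all $t\in\mathbb{R}$, $a=1,2$. $q_n(x):=\mathrm{P}(S_n=x\mid S_0=0)$, $q^f_n(x):=\sum_zq_n(x-z)f(z)$. $\mathsf c\in[1,\infty)$ is a constant such that for all $t\ge0$, $n\in\mathbb{N}$, $a=1,2$: $\sum_xe^{tx^a}q_n(x)\le e^{\mathsf ct^2n/2}$, $\sum_xe^{tx^a}q_n(x)^2/q_{2n}(0)\le e^{\mathsf ct^2n/2}$, $\sum_xe^{t|x|}q_n(x)\le\mathsf ce^{2\mathsf ct^2n}$, $\sup_xe^{t|x|}q_n(x)\le\mathsf ce^{2\mathsf ct^2n}/n$. Weights: $w_t(x):=e^{-t|x|}$, $\mathcal W_t(\mathbf x):=\prod_{i=1}^hw_t(x^i)$ for $\mathbf x=(x^1,..,x^h)\in(\mathbb{Z}^2)^h$. Partitions $I\vdash\{1,..,h\}$, $*$ = all singletons; $\mathbf x\sim I$ means $x^a=x^b$ for $a,b$ in a common block and $x^a\ne x^b$ for $a,b$ in distinct blocks of size $\ge2$. $\mathsf q^{f,I}_n(\mathbf x):=\mathbf 1_{\{\mathbf x\sim I\}}\prod_iq^f_n(x^i)$, $\widehat{\mathsf q}^{f,I}_L:=\sum_{n=1}^L\mathsf q^{f,I}_n$; $\ell^p$ norms on $\mathbb{Z}^2$ resp. $(\mathbb{Z}^2)^h$. *)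

theory Defs
  imports "HOL-Probability.Probability" "HOL-Library.Disjoint_Sets"
begin

text \<open>Points of Z^2 are pairs of integers. The law of S_n started at 0, given the
  increment law q1, is the n-fold convolution of q1.\<close>

primrec walk :: "(int \<times> int) pmf \<Rightarrow> nat \<Rightarrow> (int \<times> int) pmf" where
  "walk q1 0 = return_pmf (0, 0)"
| "walk q1 (Suc n) = bind_pmf (walk q1 n) (\<lambda>s. map_pmf (\<lambda>z. s + z) q1)"

definition zn :: "int \<times> int \<Rightarrow> real" where
  "zn x = sqrt (real_of_int (fst x) ^ 2 + real_of_int (snd x) ^ 2)"

definition wt :: "real \<Rightarrow> int \<times> int \<Rightarrow> real" where
  "wt t x = exp (- t * zn x)"

definition Wt :: "real \<Rightarrow> (int \<times> int) list \<Rightarrow> real" where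
  "Wt t xs = (\<Prod>i<length xs. wt t (xs ! i))"

definition qabs :: "(int \<times> int) pmf \<Rightarrow> nat \<Rightarrow> (int \<times> int \<Rightarrow> real) \<Rightarrow> int \<times> int \<Rightarrow> ennreal" where
  "qabs q1 n f x = (\<integral>\<^sup>+ z. ennreal (pmf (walk q1 n) (x - z) * \<bar>f z\<bar>) \<partial>count_space UNIV)"

text \<open>Partitions of {1..h} are represented as partitions of {0..<h}; tuples as lists of length h.\<close>
definition star :: "nat \<Rightarrow> nat set set" where
  "star h = {{i} | i. i < h}"

definition sim :: "(int \<times> int) list \<Rightarrow> nat set set \<Rightarrow> bool" where
  "sim xs I \<longleftrightarrow>
     (\<forall>B\<in>I. \<forall>a\<in>B. \<forall>b\<in>B. xs ! a = xs ! b) \<and>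
     (\<forall>B1\<in>I. \<forall>B2\<in>I. B1 \<noteq> B2 \<and> card B1 \<ge> 2 \<and> card B2 \<ge> 2 \<longrightarrow>
         (\<forall>a\<in>B1. \<forall>b\<in>B2. xs ! a \<noteq> xs ! b))"

definition qhat :: "(int \<times> int) pmf \<Rightarrow> (int \<times> int \<Rightarrow> real) \<Rightarrow> nat set set \<Rightarrow> nat \<Rightarrow>
    (int \<times> int) list \<Rightarrow> ennreal" where
  "qhat q1 f I L xs = (\<Sum>n\<in>{1..L}. (if sim xs I then (\<Prod>i<length xs. qabs q1 n f (xs ! i)) else 0))"

definition enn_powr :: "ennreal \<Rightarrow> real \<Rightarrow> ennreal" where
  "enn_powr a q = (if a = \<top> then \<top> else ennreal (enn2real a powr q))"

definition lpnorm :: "ennreal \<Rightarrow> 'a set \<Rightarrow> ('a \<Rightarrow> ennreal) \<Rightarrow> ennreal" where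
  "lpnorm r A G = (if r = \<top> then (SUP x\<in>A. G x)
     else enn_powr (\<integral>\<^sup>+ x. enn_powr (G x) (enn2real r) \<partial>count_space A) (1 / enn2real r))"

text \<open>Hoelder conjugate r/(r-1) with conventions 1/0 = infinity and infinity/(infinity-1) = 1.\<close>
definition conj_exp :: "ennreal \<Rightarrow> ennreal" where
  "conj_exp r = (if r = 1 then \<top> else if r = \<top> then 1
                 else ennreal (enn2real r / (enn2real r - 1)))"

text \<open>L^{1-1/r}, with 1/infinity = 0.\<close>
definition Lpow :: "ennreal \<Rightarrow> nat \<Rightarrow> ennreal" where
  "Lpow r L = (if r = \<top> then ennreal (real L) else ennreal (real L powr (1 - 1 / enn2real r)))"

end

theory Submission
  imports Defs
begin

text \<open>
  By the triangle inequality \<open>|x| \<le> |x - z| + |z|\<close>, each factor \<open>q\<^sup>|\<^sup>f\<^sup>|\<^sub>n(x\<^sup>i) / w\<^sub>t(x\<^sup>i)\<close> is at most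
  the convolution \<open>G\<^sub>n = k\<^sub>n * F\<close> of \<open>F = |f| / w\<^sub>t\<close> with \<open>k\<^sub>n(y) = q\<^sub>n(y) e\<^sup>t\<^sup>|\<^sup>y\<^sup>|\<close>, a kernel of
  \<open>\<ell>\<^sup>1\<close>-norm at most \<open>C\<close> and supremum at most \<open>C / n\<close>. As \<open>I \<noteq> *\<close>, some block of \<open>I\<close> contains
  indices \<open>a \<noteq> b\<close>, so \<open>q\<^sup>^\<^sup>|\<^sup>f\<^sup>|\<^sup>,\<^sup>I\<^sub>L / W\<^sub>t \<le> \<Sum>\<^sub>n \<one>{x\<^sup>a = x\<^sup>b} \<Prod>\<^sub>i G\<^sub>n(x\<^sup>i)\<close>. Jensen's inequality in \<open>n\<close>
  and summation over the \<open>h - 2\<close> free coordinates give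
  \<open>\<parallel>q\<^sup>^ / W\<^sub>t\<parallel>\<^sub>p \<le> (C \<parallel>F\<parallel>\<^sub>p)\<^sup>h\<^sup>-\<^sup>2 \<Sum>\<^sub>n \<parallel>G\<^sub>n\<^sup>2\<parallel>\<^sub>p\<close>, and \<open>\<parallel>G\<^sub>n\<^sup>2\<parallel>\<^sub>p \<le> \<parallel>G\<^sub>n\<parallel>\<^sub>\<infinity> \<parallel>G\<^sub>n\<parallel>\<^sub>p\<close>.
  Young's inequality bounds \<open>\<parallel>G\<^sub>n\<parallel>\<^sub>p \<le> C \<parallel>F\<parallel>\<^sub>p\<close> and \<open>\<parallel>G\<^sub>n\<parallel>\<^sub>\<infinity> \<le> C n\<^sup>-\<^sup>1\<^sup>/\<^sup>r \<parallel>F\<parallel>\<^sub>r\<close>, and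
  \<open>\<Sum>\<^sub>n\<^sub>\<le>\<^sub>L n\<^sup>-\<^sup>1\<^sup>/\<^sup>r \<le> r/(r-1) L\<^sup>1\<^sup>-\<^sup>1\<^sup>/\<^sup>r\<close>. For \<open>r < p\<close> the factor \<open>r/(r-1)\<close> is replaced by
  \<open>4 p/(p-1)\<close>: there \<open>\<parallel>G\<^sub>n\<^sup>2\<parallel>\<^sub>p\<close> is also bounded through \<open>\<parallel>F\<parallel>\<^sub>r\<close> alone, and the sum of the smaller of
  the two bounds is split where they cross.
\<close>

subsection \<open>Real powers of extended nonnegative reals\<close>

lemma enn_powr_ennreal: "0 \<le> a \<Longrightarrow> enn_powr (ennreal a) q = ennreal (a powr q)"
  by (simp add: enn_powr_def)

lemma enn_powr_top [simp]: "enn_powr \<top> q = \<top>"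
  by (simp add: enn_powr_def)

lemma enn_powr_0 [simp]: "enn_powr 0 q = 0"
  by (simp add: enn_powr_def)

lemma enn_powr_1 [simp]: "enn_powr a 1 = a"
  by (cases a) (auto simp: enn_powr_def)

lemma enn_powr_eq_0_iff [simp]: "enn_powr a q = 0 \<longleftrightarrow> a = 0"
  by (cases a) (auto simp: enn_powr_def ennreal_eq_0_iff)

lemma enn_powr_mult:
  assumes "q > 0"
  shows "enn_powr (a * b) q = enn_powr a q * enn_powr b q"
proof (cases "a = \<top> \<or> b = \<top>")
  case True
  then show ?thesis
    by (cases "a = 0"; cases "b = 0") (auto simp: ennreal_top_mult ennreal_mult_top)
next
  case False
  then obtain x y where "a = ennreal x" "b = ennreal y" "0 \<le> x" "0 \<le> y"
    by (metis ennreal_cases)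
  then show ?thesis
    using assms by (simp add: enn_powr_ennreal powr_mult ennreal_mult[symmetric])
qed

lemma enn_powr_prod:
  assumes "q > 0"
  shows "enn_powr (\<Prod>i\<in>A. f i) q = (\<Prod>i\<in>A. enn_powr (f i) q)"
proof (induction A rule: infinite_finite_induct)
  case (insert x A)
  then show ?case by (simp add: enn_powr_mult assms)
qed (simp_all add: enn_powr_def)

lemma enn_powr_add:
  assumes "q1 > 0" "q2 > 0"
  shows "enn_powr a (q1 + q2) = enn_powr a q1 * enn_powr a q2"
proof (cases "a = \<top>")
  case False
  then obtain x where "a = ennreal x" "0 \<le> x" by (metis ennreal_cases)
  then show ?thesis
    by (cases "x = 0") (simp_all add: enn_powr_ennreal powr_add ennreal_mult)
qed simp

lemma enn_powr_powr: "enn_powr (enn_powr a q1) q2 = enn_powr a (q1 * q2)"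
  by (cases a) (simp_all add: enn_powr_ennreal powr_powr)

lemma enn_powr_mono:
  assumes "a \<le> b" "q \<ge> 0"
  shows "enn_powr a q \<le> enn_powr b q"
proof (cases "b = \<top>")
  case False
  with assms(1) obtain x y where "a = ennreal x" "b = ennreal y" "0 \<le> x" "x \<le> y"
    by (metis ennreal_cases ennreal_le_iff ennreal_top_neq_of_nat top.extremum_unique)
  then show ?thesis
    using assms(2) by (cases "x = 0") (simp_all add: enn_powr_ennreal powr_mono2)
qed simp

lemma enn_powr_le_cancel:
  assumes "enn_powr a q \<le> enn_powr b q" "q > 0"
  shows "a \<le> b"
proof -
  have "enn_powr (enn_powr a q) (1 / q) \<le> enn_powr (enn_powr b q) (1 / q)"
    by (rule enn_powr_mono) (use assms in auto)
  then show ?thesis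
    using assms(2) by (simp add: enn_powr_powr field_simps)
qed

lemma enn_powr_le_ennreal_iff:
  assumes "q > 0" "0 \<le> y"
  shows "enn_powr a q \<le> ennreal (y powr q) \<longleftrightarrow> a \<le> ennreal y"
  using enn_powr_le_cancel[of a q "ennreal y"] enn_powr_mono[of a "ennreal y" q] assms
  by (auto simp: enn_powr_ennreal)

subsection \<open>Jensen and Minkowski inequalities for sums\<close>

lemma young_tangent:
  fixes x \<mu> p :: real
  assumes "p > 1" "x \<ge> 0" "\<mu> \<ge> 0"
  shows "p * \<mu> powr (p - 1) * x \<le> x powr p + (p - 1) * \<mu> powr p"
proof -
  define q where "q = p / (p - 1)"
  have q: "q > 1" "1 / p + 1 / q = 1"
    using assms by (auto simp: q_def field_simps)
  have "x * \<mu> powr (p - 1) \<le> x powr p / p + (\<mu> powr (p - 1)) powr q / q"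
    using Youngs_inequality[OF assms(1) q assms(2)] assms by simp
  also have "(\<mu> powr (p - 1)) powr q = \<mu> powr p"
    using assms by (simp add: powr_powr q_def)
  finally show ?thesis
    using assms by (simp add: q_def field_simps)
qed

lemma young_tangent_ennreal:
  assumes "p > 1" "\<mu> \<ge> 0"
  shows "ennreal (p * \<mu> powr (p - 1)) * v \<le> enn_powr v p + ennreal ((p - 1) * \<mu> powr p)"
proof (cases v)
  case (real x)
  then have "ennreal (p * \<mu> powr (p - 1) * x) \<le> ennreal (x powr p + (p - 1) * \<mu> powr p)"
    using young_tangent[OF assms(1) _ assms(2), of x] by (intro ennreal_leI) simp
  then show ?thesis
    using real assms by (simp add: enn_powr_ennreal ennreal_mult ennreal_plus)
qed simp

lemma powr_le_of_tangent_bounds: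
  fixes m s T p :: real
  assumes "p > 1" "s > 0" "m \<ge> 0"
    and tangent: "\<And>\<mu>. \<mu> \<ge> 0 \<Longrightarrow> p * \<mu> powr (p - 1) * m \<le> T + (p - 1) * \<mu> powr p * s"
  shows "m powr p \<le> s powr (p - 1) * T"
proof (cases "m = 0")
  case False
  define \<mu> where "\<mu> = m / s"
  have \<mu>: "\<mu> > 0" "m = \<mu> * s"
    using assms False by (auto simp: \<mu>_def)
  have eq: "p * \<mu> powr (p - 1) * m = p * (\<mu> powr p * s)"
    using \<mu> by (simp add: powr_diff field_simps)
  have "p * \<mu> powr (p - 1) * m \<le> T + (p - 1) * \<mu> powr p * s"
    using \<mu>(1) by (intro tangent) simp
  then have "p * (\<mu> powr p * s) \<le> T + (p - 1) * (\<mu> powr p * s)"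
    unfolding eq by (simp only: mult.assoc)
  then have "\<mu> powr p * s \<le> T"
    by (simp add: algebra_simps)
  then have "s powr (p - 1) * (\<mu> powr p * s) \<le> s powr (p - 1) * T"
    by (intro mult_left_mono) auto
  moreover have "m powr p = s powr (p - 1) * (\<mu> powr p * s)"
    using \<mu> assms by (simp add: powr_mult powr_diff field_simps)
  ultimately show ?thesis by simp
next
  case True
  have "0 \<le> T"
    using tangent[of 0] assms by simp
  then show ?thesis
    using True by simp
qed

lemma enn_powr_le_of_tangent_bounds:
  fixes M S T :: ennreal
  assumes p: "p > 1" and S: "S \<noteq> 0" "S \<noteq> \<top>" and T: "T \<noteq> \<top>"
    and tangent: "\<And>\<mu>. \<mu> \<ge> 0 \<Longrightarrow> ennreal (p * \<mu> powr (p - 1)) * M \<le> T + ennreal ((p - 1) * \<mu> powr p) * S"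
  shows "enn_powr M p \<le> enn_powr S (p - 1) * T"
proof -
  obtain s T' where s: "S = ennreal s" "s > 0" and T': "T = ennreal T'" "T' \<ge> 0"
    using S T by (metis ennreal_cases ennreal_eq_0_iff not_le)
  have "ennreal p * M \<le> ennreal T' + ennreal ((p - 1) * s)"
    using tangent[of 1] p s T' by (simp add: ennreal_mult[symmetric])
  then have "M \<noteq> \<top>"
    using p by (auto simp: ennreal_mult_top top_unique)
  then obtain m where m: "M = ennreal m" "m \<ge> 0"
    by (metis ennreal_cases)
  have "m powr p \<le> s powr (p - 1) * T'"
  proof (rule powr_le_of_tangent_bounds)
    fix \<mu> :: real
    assume \<mu>: "\<mu> \<ge> 0"
    have "ennreal (p * \<mu> powr (p - 1) * m) \<le> ennreal (T' + (p - 1) * \<mu> powr p * s)"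
      using tangent[OF \<mu>] p \<mu> s T' m by (simp add: ennreal_mult ennreal_plus)
    then show "p * \<mu> powr (p - 1) * m \<le> T' + (p - 1) * \<mu> powr p * s"
      using p s T' by (subst (asm) ennreal_le_iff) auto
  qed (use p s m in auto)
  then show ?thesis
    using s T' m by (simp add: enn_powr_ennreal ennreal_mult[symmetric] ennreal_leI)
qed

lemma nn_integral_count_space_eq_0_iff:
  "(\<integral>\<^sup>+x. u x \<partial>count_space A) = 0 \<longleftrightarrow> (\<forall>x\<in>A. u x = 0)"
  by (simp add: nn_integral_0_iff_AE AE_count_space)

lemma nn_integral_tangent_le:
  fixes w v :: "'a \<Rightarrow> ennreal"
  assumes "p > 1" "\<mu> \<ge> 0"
  shows "ennreal (p * \<mu> powr (p - 1)) * (\<integral>\<^sup>+x. w x * v x \<partial>count_space A)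
    \<le> (\<integral>\<^sup>+x. w x * enn_powr (v x) p \<partial>count_space A)
      + ennreal ((p - 1) * \<mu> powr p) * (\<integral>\<^sup>+x. w x \<partial>count_space A)"
proof -
  have "ennreal (p * \<mu> powr (p - 1)) * (\<integral>\<^sup>+x. w x * v x \<partial>count_space A)
      = (\<integral>\<^sup>+x. w x * (ennreal (p * \<mu> powr (p - 1)) * v x) \<partial>count_space A)"
    by (simp add: nn_integral_cmult[symmetric] mult_ac)
  also have "\<dots> \<le> (\<integral>\<^sup>+x. w x * (enn_powr (v x) p + ennreal ((p - 1) * \<mu> powr p)) \<partial>count_space A)"
    by (intro nn_integral_mono mult_left_mono young_tangent_ennreal assms) auto
  also have "\<dots> = (\<integral>\<^sup>+x. w x * enn_powr (v x) p \<partial>count_space A)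
      + ennreal ((p - 1) * \<mu> powr p) * (\<integral>\<^sup>+x. w x \<partial>count_space A)"
    by (simp add: distrib_left nn_integral_add nn_integral_multc mult.commute)
  finally show ?thesis .
qed

lemma jensen_count_space:
  fixes w v :: "'a \<Rightarrow> ennreal"
  assumes p: "p \<ge> 1"
  shows "enn_powr (\<integral>\<^sup>+x. w x * v x \<partial>count_space A) p
    \<le> enn_powr (\<integral>\<^sup>+x. w x \<partial>count_space A) (p - 1) * (\<integral>\<^sup>+x. w x * enn_powr (v x) p \<partial>count_space A)"
  (is "enn_powr ?M p \<le> enn_powr ?S (p - 1) * ?T")
proof -
  note tangent = nn_integral_tangent_le[where w = w and v = v and A = A]
  have M0: "?M = 0" if "?S = 0 \<or> ?T = 0"
    using that by (auto simp: nn_integral_count_space_eq_0_iff)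
  consider "?S = 0 \<or> ?T = 0" | "p = 1" | "p > 1" "?S \<noteq> 0" "?T \<noteq> 0" "?S = \<top> \<or> ?T = \<top>"
    | "p > 1" "?S \<noteq> 0" "?T \<noteq> 0" "?S \<noteq> \<top>" "?T \<noteq> \<top>"
    using p less_eq_real_def by blast
  then show ?thesis
  proof cases
    case 1
    then show ?thesis using M0 by simp
  next
    case 2
    then show ?thesis
      using M0 by (cases ?S) (auto simp: enn_powr_ennreal ennreal_top_mult)
  next
    case 3
    then have "enn_powr ?S (p - 1) * ?T = \<top>"
      by (auto simp: ennreal_top_mult ennreal_mult_top)
    then show ?thesis by simp
  next
    case 4
    then show ?thesis
      by (intro enn_powr_le_of_tangent_bounds tangent) auto
  qed
qed

lemma jensen_sum:
  fixes w v :: "'i \<Rightarrow> ennreal"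
  assumes "finite N" "p \<ge> 1"
  shows "enn_powr (\<Sum>n\<in>N. w n * v n) p
    \<le> enn_powr (\<Sum>n\<in>N. w n) (p - 1) * (\<Sum>n\<in>N. w n * enn_powr (v n) p)"
  using jensen_count_space[OF assms(2), where w = w and v = v and A = N] assms(1)
  by (simp add: nn_integral_count_space_finite)

lemma minkowski_sum_count_space:
  fixes H :: "'i \<Rightarrow> 'a \<Rightarrow> ennreal" and c :: "'i \<Rightarrow> real"
  assumes N: "finite N" and p: "p > 1" and c: "\<And>n. n \<in> N \<Longrightarrow> c n > 0"
    and H: "\<And>n. n \<in> N \<Longrightarrow> (\<integral>\<^sup>+x. enn_powr (H n x) p \<partial>count_space UNIV) \<le> ennreal (c n powr p)"
  shows "(\<integral>\<^sup>+x. enn_powr (\<Sum>n\<in>N. H n x) p \<partial>count_space UNIV) \<le> ennreal ((\<Sum>n\<in>N. c n) powr p)"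
proof -
  define S where "S = (\<Sum>n\<in>N. c n)"
  have S: "S \<ge> 0" "(\<Sum>n\<in>N. ennreal (c n)) = ennreal S"
    using c by (auto simp: S_def less_imp_le intro: sum_nonneg)
  have normalised: "ennreal (c n) * enn_powr (ennreal (1 / c n) * H n x) p
      = ennreal (c n powr (1 - p)) * enn_powr (H n x) p" if "n \<in> N" for n x
    using c[OF that] p
    by (simp add: enn_powr_mult enn_powr_ennreal ennreal_mult[symmetric] powr_divide powr_diff
        mult.assoc[symmetric] field_simps)
  have pointwise: "enn_powr (\<Sum>n\<in>N. H n x) p
      \<le> enn_powr (ennreal S) (p - 1) * (\<Sum>n\<in>N. ennreal (c n powr (1 - p)) * enn_powr (H n x) p)" for x
  proof -
    have "ennreal (c n) * (ennreal (1 / c n) * H n x) = H n x" if "n \<in> N" for n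
      using c[OF that] by (simp add: ennreal_mult[symmetric] mult.assoc[symmetric])
    then have "(\<Sum>n\<in>N. H n x) = (\<Sum>n\<in>N. ennreal (c n) * (ennreal (1 / c n) * H n x))"
      by simp
    then show ?thesis
      using jensen_sum[OF N less_imp_le[OF p], where w = "\<lambda>n. ennreal (c n)" and v = "\<lambda>n. ennreal (1 / c n) * H n x"]
      by (simp add: S normalised cong: sum.cong)
  qed
  have "(\<integral>\<^sup>+x. enn_powr (\<Sum>n\<in>N. H n x) p \<partial>count_space UNIV)
      \<le> (\<integral>\<^sup>+x. enn_powr (ennreal S) (p - 1)
        * (\<Sum>n\<in>N. ennreal (c n powr (1 - p)) * enn_powr (H n x) p) \<partial>count_space UNIV)"
    by (intro nn_integral_mono pointwise)
  also have "\<dots> = enn_powr (ennreal S) (p - 1)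
        * (\<Sum>n\<in>N. ennreal (c n powr (1 - p)) * (\<integral>\<^sup>+x. enn_powr (H n x) p \<partial>count_space UNIV))"
    by (simp add: nn_integral_cmult nn_integral_sum)
  also have "\<dots> \<le> enn_powr (ennreal S) (p - 1) * (\<Sum>n\<in>N. ennreal (c n powr (1 - p)) * ennreal (c n powr p))"
    by (intro mult_left_mono sum_mono H) auto
  also have "(\<Sum>n\<in>N. ennreal (c n powr (1 - p)) * ennreal (c n powr p)) = (\<Sum>n\<in>N. ennreal (c n))"
  proof (rule sum.cong)
    fix n
    assume "n \<in> N"
    with c have "c n > 0" by blast
    then show "ennreal (c n powr (1 - p)) * ennreal (c n powr p) = ennreal (c n)"
      by (simp add: ennreal_mult[symmetric] powr_add[symmetric])
  qed simp
  also have "\<dots> = ennreal S"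
    by (rule S(2))
  also have "enn_powr (ennreal S) (p - 1) * ennreal S = ennreal (S powr p)"
    using enn_powr_add[of "p - 1" 1 "ennreal S"] p S by (simp add: enn_powr_ennreal)
  finally show ?thesis
    by (simp add: S_def)
qed

subsection \<open>Sums over tuples\<close>

lemma bij_betw_Cons_lists:
  "bij_betw (\<lambda>(x, ys). x # ys) (UNIV \<times> {ys. length ys = h}) {xs. length xs = Suc h}"
  unfolding bij_betw_def
proof
  show "inj_on (\<lambda>(x, ys). x # ys) (UNIV \<times> {ys. length ys = h})"
    by (auto simp: inj_on_def)
  show "(\<lambda>(x, ys). x # ys) ` (UNIV \<times> {ys. length ys = h}) = {xs. length xs = Suc h}"
  proof (intro equalityI subsetI)
    fix xs assume "xs \<in> {xs. length xs = Suc h}"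
    then obtain y ys where "xs = y # ys" "length ys = h" by (cases xs) auto
    then show "xs \<in> (\<lambda>(x, ys). x # ys) ` (UNIV \<times> {ys. length ys = h})" by force
  qed auto
qed

lemma nn_integral_lists_Suc:
  fixes F :: "'a list \<Rightarrow> ennreal"
  shows "(\<integral>\<^sup>+xs. F xs \<partial>count_space {xs. length xs = Suc h})
       = (\<integral>\<^sup>+x. \<integral>\<^sup>+ys. F (x # ys) \<partial>count_space {ys. length ys = h} \<partial>count_space UNIV)"
proof -
  have "(\<integral>\<^sup>+xs. F xs \<partial>count_space {xs. length xs = Suc h})
      = (\<integral>\<^sup>+z. F ((\<lambda>(x, ys). x # ys) z) \<partial>count_space (UNIV \<times> {ys. length ys = h}))"
    by (rule nn_integral_bij_count_space[symmetric, OF bij_betw_Cons_lists])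
  also have "\<dots> = (\<integral>\<^sup>+z. F (fst z # snd z) * indicator (UNIV \<times> {ys. length ys = h}) z \<partial>count_space UNIV)"
    by (subst nn_integral_count_space_indicator) (auto simp: case_prod_beta)
  also have "\<dots> = (\<integral>\<^sup>+x. \<integral>\<^sup>+ys. F (x # ys) * indicator (UNIV \<times> {ys. length ys = h}) (x, ys) \<partial>count_space UNIV \<partial>count_space UNIV)"
    by (subst nn_integral_fst_count_space[symmetric]) simp
  also have "\<dots> = (\<integral>\<^sup>+x. \<integral>\<^sup>+ys. F (x # ys) \<partial>count_space {ys. length ys = h} \<partial>count_space UNIV)"
    by (intro nn_integral_cong) (simp add: nn_integral_count_space_indicator indicator_def)
  finally show ?thesis .
qed

lemma nn_integral_lists_prod:
  fixes \<phi> :: "nat \<Rightarrow> 'a \<Rightarrow> ennreal"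
  shows "(\<integral>\<^sup>+xs. (\<Prod>i<h. \<phi> i (xs ! i)) \<partial>count_space {xs. length xs = h})
       = (\<Prod>i<h. \<integral>\<^sup>+x. \<phi> i x \<partial>count_space UNIV)"
proof (induction h arbitrary: \<phi>)
  case 0
  have "{xs::'a list. length xs = 0} = {[]}" by auto
  then show ?case by (simp add: nn_integral_count_space_finite)
next
  case (Suc h)
  have "(\<integral>\<^sup>+xs. (\<Prod>i<Suc h. \<phi> i (xs ! i)) \<partial>count_space {xs. length xs = Suc h})
      = (\<integral>\<^sup>+x. \<integral>\<^sup>+ys. \<phi> 0 x * (\<Prod>i<h. \<phi> (Suc i) (ys ! i)) \<partial>count_space {ys. length ys = h} \<partial>count_space UNIV)"
    unfolding nn_integral_lists_Suc prod.lessThan_Suc_shift by simp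
  also have "\<dots> = (\<integral>\<^sup>+x. \<phi> 0 x * (\<Prod>i<h. \<integral>\<^sup>+x. \<phi> (Suc i) x \<partial>count_space UNIV) \<partial>count_space UNIV)"
    by (simp add: nn_integral_cmult Suc.IH[of "\<lambda>i. \<phi> (Suc i)"])
  also have "\<dots> = (\<Prod>i<Suc h. \<integral>\<^sup>+x. \<phi> i x \<partial>count_space UNIV)"
    unfolding prod.lessThan_Suc_shift by (simp add: nn_integral_multc)
  finally show ?case .
qed

lemma prod_remove_two:
  fixes g :: "nat \<Rightarrow> 'b::comm_monoid_mult"
  assumes "a < h" "b < h" "a \<noteq> b"
  shows "(\<Prod>i<h. g i) = g a * g b * (\<Prod>i\<in>{..<h} - {a, b}. g i)"
proof -
  have "(\<Prod>i<h. g i) = g a * (\<Prod>i\<in>{..<h} - {a}. g i)"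
    using assms by (intro prod.remove) auto
  also have "(\<Prod>i\<in>{..<h} - {a}. g i) = g b * (\<Prod>i\<in>{..<h} - {a} - {b}. g i)"
    using assms by (intro prod.remove) auto
  also have "{..<h} - {a} - {b} = {..<h} - {a, b}" by auto
  finally show ?thesis by (simp add: mult_ac)
qed

lemma nn_integral_indicator_pair:
  fixes \<Psi> :: "'a \<Rightarrow> ennreal"
  shows "(\<integral>\<^sup>+w. \<Psi> w * indicator {x} w * indicator {y} w \<partial>count_space UNIV) = of_bool (x = y) * \<Psi> x"
proof (cases "x = y")
  case True
  have "\<Psi> w * indicator {x} w * indicator {y} w = \<Psi> x * indicator {x} w" for w
    using True by (auto simp: indicator_def)
  then show ?thesis
    using True by (simp add: nn_integral_cmult_indicator)
next
  case False
  then have "\<Psi> w * indicator {x} w * indicator {y} w = 0" for w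
    by (auto simp: indicator_def)
  then show ?thesis
    using False by simp
qed

text \<open>Writing \<open>\<one>{x\<^sub>a = x\<^sub>b} \<Psi>(x\<^sub>a)\<close> as \<open>\<Sum>\<^sub>w \<Psi>(w) \<one>{x\<^sub>a = w} \<one>{x\<^sub>b = w}\<close> turns the integrand into a product
  over the coordinates.\<close>

lemma diagonal_eq_nn_integral_prod:
  fixes \<Psi> \<phi> :: "'a \<Rightarrow> ennreal"
  assumes ab: "a < h" "b < h" "a \<noteq> b"
  shows "of_bool (xs ! a = xs ! b) * \<Psi> (xs ! a) * (\<Prod>i\<in>{..<h} - {a, b}. \<phi> (xs ! i))
    = (\<integral>\<^sup>+w. \<Psi> w * (\<Prod>i<h. (if i = a \<or> i = b then indicator {w} else \<phi>) (xs ! i)) \<partial>count_space UNIV)"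
proof -
  have "(\<integral>\<^sup>+w. \<Psi> w * (\<Prod>i<h. (if i = a \<or> i = b then indicator {w} else \<phi>) (xs ! i)) \<partial>count_space UNIV)
      = (\<integral>\<^sup>+w. \<Psi> w * indicator {xs ! a} w * indicator {xs ! b} w * (\<Prod>i\<in>{..<h} - {a, b}. \<phi> (xs ! i))
          \<partial>count_space UNIV)"
    using ab by (intro nn_integral_cong) (simp add: prod_remove_two[OF ab] indicator_def mult_ac)
  also have "\<dots> = of_bool (xs ! a = xs ! b) * \<Psi> (xs ! a) * (\<Prod>i\<in>{..<h} - {a, b}. \<phi> (xs ! i))"
    by (simp add: nn_integral_multc nn_integral_indicator_pair)
  finally show ?thesis ..
qed

lemma nn_integral_lists_diagonal:
  fixes \<Psi> \<phi> :: "'a::countable \<Rightarrow> ennreal"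
  assumes ab: "a < h" "b < h" "a \<noteq> b"
  shows "(\<integral>\<^sup>+xs. of_bool (xs ! a = xs ! b) * \<Psi> (xs ! a) * (\<Prod>i\<in>{..<h} - {a, b}. \<phi> (xs ! i))
            \<partial>count_space {xs. length xs = h})
       = (\<integral>\<^sup>+x. \<Psi> x \<partial>count_space UNIV) * (\<integral>\<^sup>+x. \<phi> x \<partial>count_space UNIV) ^ (h - 2)"
proof -
  define e where "e w i = (if i = a \<or> i = b then indicator {w} else \<phi>)" for w i
  have "(\<integral>\<^sup>+xs. of_bool (xs ! a = xs ! b) * \<Psi> (xs ! a) * (\<Prod>i\<in>{..<h} - {a, b}. \<phi> (xs ! i))
            \<partial>count_space {xs. length xs = h})
      = (\<integral>\<^sup>+w. \<integral>\<^sup>+xs. \<Psi> w * (\<Prod>i<h. e w i (xs ! i)) \<partial>count_space {xs. length xs = h} \<partial>count_space UNIV)"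
    unfolding diagonal_eq_nn_integral_prod[OF ab] e_def
    by (rule nn_integral_count_space_nn_integral) auto
  also have "\<dots> = (\<integral>\<^sup>+w. \<Psi> w * (\<Prod>i<h. \<integral>\<^sup>+x. e w i x \<partial>count_space UNIV) \<partial>count_space UNIV)"
    by (simp add: nn_integral_cmult nn_integral_lists_prod)
  also have "\<dots> = (\<integral>\<^sup>+w. \<Psi> w * (\<integral>\<^sup>+x. \<phi> x \<partial>count_space UNIV) ^ (h - 2) \<partial>count_space UNIV)"
  proof (intro nn_integral_cong arg_cong[where f = "(*) _"])
    fix w
    have "(\<Prod>i<h. \<integral>\<^sup>+x. e w i x \<partial>count_space UNIV) = (\<Prod>i\<in>{..<h} - {a, b}. \<integral>\<^sup>+x. \<phi> x \<partial>count_space UNIV)"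
      by (simp add: prod_remove_two[OF ab] e_def)
    also have "\<dots> = (\<integral>\<^sup>+x. \<phi> x \<partial>count_space UNIV) ^ (h - 2)"
      using ab by (simp add: card_Diff_subset numeral_2_eq_2)
    finally show "(\<Prod>i<h. \<integral>\<^sup>+x. e w i x \<partial>count_space UNIV) = (\<integral>\<^sup>+x. \<phi> x \<partial>count_space UNIV) ^ (h - 2)" .
  qed
  also have "\<dots> = (\<integral>\<^sup>+x. \<Psi> x \<partial>count_space UNIV) * (\<integral>\<^sup>+x. \<phi> x \<partial>count_space UNIV) ^ (h - 2)"
    by (simp add: nn_integral_multc)
  finally show ?thesis .
qed

text \<open>Jensen's inequality in \<open>n\<close>, with weights \<open>\<one>{x\<^sub>a = x\<^sub>b} G\<^sub>n(x\<^sub>a) G\<^sub>n(x\<^sub>b)\<close>.\<close>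

lemma powr_diagonal_sum_le:
  fixes G :: "nat \<Rightarrow> 'a \<Rightarrow> ennreal"
  assumes N: "finite N" and p: "p \<ge> 1" and ab: "a < h" "b < h" "a \<noteq> b"
  defines "W x \<equiv> \<Sum>n\<in>N. G n x * G n x"
  shows "enn_powr (\<Sum>n\<in>N. of_bool (xs ! a = xs ! b) * (\<Prod>i<h. G n (xs ! i))) p
    \<le> (\<Sum>n\<in>N. of_bool (xs ! a = xs ! b) * (enn_powr (W (xs ! a)) (p - 1) * (G n (xs ! a) * G n (xs ! a)))
        * (\<Prod>i\<in>{..<h} - {a, b}. enn_powr (G n (xs ! i)) p))"
proof -
  define w where "w n = of_bool (xs ! a = xs ! b) * G n (xs ! a) * G n (xs ! b)" for n
  define v where "v n = (\<Prod>i\<in>{..<h} - {a, b}. G n (xs ! i))" for n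
  have "(\<Sum>n\<in>N. of_bool (xs ! a = xs ! b) * (\<Prod>i<h. G n (xs ! i))) = (\<Sum>n\<in>N. w n * v n)"
    by (simp add: prod_remove_two[OF ab] w_def v_def mult_ac)
  then have "enn_powr (\<Sum>n\<in>N. of_bool (xs ! a = xs ! b) * (\<Prod>i<h. G n (xs ! i))) p
      \<le> enn_powr (\<Sum>n\<in>N. w n) (p - 1) * (\<Sum>n\<in>N. w n * enn_powr (v n) p)"
    using jensen_sum[OF N p, where w = w and v = v] by simp
  also have "\<dots> = (\<Sum>n\<in>N. of_bool (xs ! a = xs ! b) * (enn_powr (W (xs ! a)) (p - 1) * (G n (xs ! a) * G n (xs ! a)))
        * (\<Prod>i\<in>{..<h} - {a, b}. enn_powr (G n (xs ! i)) p))"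
  proof (cases "xs ! a = xs ! b")
    case True
    have "(\<Sum>n\<in>N. w n) = W (xs ! a)"
      using True by (simp add: w_def W_def)
    moreover have "enn_powr (v n) p = (\<Prod>i\<in>{..<h} - {a, b}. enn_powr (G n (xs ! i)) p)" for n
      using p by (simp add: v_def enn_powr_prod)
    ultimately show ?thesis
      using True by (simp add: w_def sum_distrib_left mult_ac)
  qed (simp add: w_def)
  finally show ?thesis .
qed

lemma diagonal_sum_powr_bound:
  fixes G :: "nat \<Rightarrow> 'a::countable \<Rightarrow> ennreal" and \<Phi> :: "'a list \<Rightarrow> ennreal"
  assumes N: "finite N" and p: "p > 1" and ab: "a < h" "b < h" "a \<noteq> b"
    and Phi: "\<And>xs. length xs = h \<Longrightarrow> \<Phi> xs \<le> (\<Sum>n\<in>N. of_bool (xs ! a = xs ! b) * (\<Prod>i<h. G n (xs ! i)))"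
    and Bp: "\<And>n. n \<in> N \<Longrightarrow> (\<integral>\<^sup>+x. enn_powr (G n x) p \<partial>count_space UNIV) \<le> Bp"
  shows "(\<integral>\<^sup>+xs. enn_powr (\<Phi> xs) p \<partial>count_space {xs. length xs = h})
      \<le> Bp ^ (h - 2) * (\<integral>\<^sup>+x. enn_powr (\<Sum>n\<in>N. G n x * G n x) p \<partial>count_space UNIV)"
proof -
  define W where "W x = (\<Sum>n\<in>N. G n x * G n x)" for x
  define \<Psi> where "\<Psi> n x = enn_powr (W x) (p - 1) * (G n x * G n x)" for n x
  define \<phi> where "\<phi> n x = enn_powr (G n x) p" for n x
  have "(\<integral>\<^sup>+xs. enn_powr (\<Phi> xs) p \<partial>count_space {xs. length xs = h})
      \<le> (\<integral>\<^sup>+xs. (\<Sum>n\<in>N. of_bool (xs ! a = xs ! b) * \<Psi> n (xs ! a)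
          * (\<Prod>i\<in>{..<h} - {a, b}. \<phi> n (xs ! i))) \<partial>count_space {xs. length xs = h})"
  proof (intro nn_integral_mono)
    fix xs :: "'a list"
    assume "xs \<in> space (count_space {xs. length xs = h})"
    then have "enn_powr (\<Phi> xs) p \<le> enn_powr (\<Sum>n\<in>N. of_bool (xs ! a = xs ! b) * (\<Prod>i<h. G n (xs ! i))) p"
      using Phi p by (intro enn_powr_mono) auto
    also have "\<dots> \<le> (\<Sum>n\<in>N. of_bool (xs ! a = xs ! b) * \<Psi> n (xs ! a)
        * (\<Prod>i\<in>{..<h} - {a, b}. \<phi> n (xs ! i)))"
      unfolding \<Psi>_def W_def \<phi>_def by (rule powr_diagonal_sum_le[OF N _ ab]) (use p in simp)
    finally show "enn_powr (\<Phi> xs) p \<le> \<dots>" .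
  qed
  also have "\<dots> = (\<Sum>n\<in>N. (\<integral>\<^sup>+x. \<Psi> n x \<partial>count_space UNIV) * (\<integral>\<^sup>+x. \<phi> n x \<partial>count_space UNIV) ^ (h - 2))"
    by (simp add: nn_integral_sum nn_integral_lists_diagonal[OF ab])
  also have "\<dots> \<le> (\<Sum>n\<in>N. (\<integral>\<^sup>+x. \<Psi> n x \<partial>count_space UNIV) * Bp ^ (h - 2))"
    using Bp by (intro sum_mono mult_left_mono power_mono) (auto simp: \<phi>_def)
  also have "\<dots> = Bp ^ (h - 2) * (\<integral>\<^sup>+x. (\<Sum>n\<in>N. \<Psi> n x) \<partial>count_space UNIV)"
    by (simp add: nn_integral_sum sum_distrib_left mult.commute)
  also have "(\<integral>\<^sup>+x. (\<Sum>n\<in>N. \<Psi> n x) \<partial>count_space UNIV) = (\<integral>\<^sup>+x. enn_powr (W x) p \<partial>count_space UNIV)"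
  proof (intro nn_integral_cong)
    fix x
    show "(\<Sum>n\<in>N. \<Psi> n x) = enn_powr (W x) p"
      using enn_powr_add[of "p - 1" 1 "W x"] p by (simp add: \<Psi>_def W_def sum_distrib_left)
  qed
  finally show ?thesis
    by (simp add: W_def)
qed

subsection \<open>Convolution on a countable group\<close>

definition nn_conv :: "('a::ab_group_add \<Rightarrow> ennreal) \<Rightarrow> ('a \<Rightarrow> ennreal) \<Rightarrow> 'a \<Rightarrow> ennreal" where
  "nn_conv k F x = (\<integral>\<^sup>+z. k (x - z) * F z \<partial>count_space UNIV)"

lemma nn_integral_count_space_reflect:
  fixes k :: "'a::ab_group_add \<Rightarrow> ennreal"
  shows "(\<integral>\<^sup>+z. k (x - z) \<partial>count_space UNIV) = (\<integral>\<^sup>+z. k z \<partial>count_space UNIV)"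
  by (rule nn_integral_bij_count_space) (rule bij_betwI[where g = "\<lambda>z. x - z"], auto)

lemma nn_integral_count_space_translate:
  fixes k :: "'a::ab_group_add \<Rightarrow> ennreal"
  shows "(\<integral>\<^sup>+x. k (x - z) \<partial>count_space UNIV) = (\<integral>\<^sup>+z. k z \<partial>count_space UNIV)"
  by (rule nn_integral_bij_count_space) (rule bij_betwI[where g = "\<lambda>x. x + z"], auto)

lemma nn_conv_le_SUP:
  assumes "(\<integral>\<^sup>+z. k z \<partial>count_space UNIV) \<le> K"
  shows "nn_conv k F x \<le> K * (SUP z. F z)"
proof -
  have "nn_conv k F x \<le> (\<integral>\<^sup>+z. k (x - z) * (SUP z. F z) \<partial>count_space UNIV)"
    unfolding nn_conv_def by (intro nn_integral_mono mult_left_mono SUP_upper) auto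
  also have "\<dots> = (\<integral>\<^sup>+z. k z \<partial>count_space UNIV) * (SUP z. F z)"
    by (simp add: nn_integral_multc nn_integral_count_space_reflect)
  also have "\<dots> \<le> K * (SUP z. F z)"
    by (intro mult_right_mono assms) simp
  finally show ?thesis .
qed

lemma powr_nn_conv_le:
  assumes s: "s \<ge> 1" and l1: "(\<integral>\<^sup>+z. k z \<partial>count_space UNIV) \<le> K" and sup: "\<And>z. k z \<le> K'"
  shows "enn_powr (nn_conv k F x) s
    \<le> enn_powr K (s - 1) * (K' * (\<integral>\<^sup>+z. enn_powr (F z) s \<partial>count_space UNIV))"
proof -
  have "enn_powr (nn_conv k F x) s
      \<le> enn_powr (\<integral>\<^sup>+z. k (x - z) \<partial>count_space UNIV) (s - 1)
        * (\<integral>\<^sup>+z. k (x - z) * enn_powr (F z) s \<partial>count_space UNIV)"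
    unfolding nn_conv_def by (rule jensen_count_space[OF s])
  also have "\<dots> \<le> enn_powr K (s - 1) * (\<integral>\<^sup>+z. K' * enn_powr (F z) s \<partial>count_space UNIV)"
  proof (rule mult_mono)
    show "enn_powr (\<integral>\<^sup>+z. k (x - z) \<partial>count_space UNIV) (s - 1) \<le> enn_powr K (s - 1)"
      using s l1 by (intro enn_powr_mono) (simp_all add: nn_integral_count_space_reflect)
    show "(\<integral>\<^sup>+z. k (x - z) * enn_powr (F z) s \<partial>count_space UNIV)
        \<le> (\<integral>\<^sup>+z. K' * enn_powr (F z) s \<partial>count_space UNIV)"
      by (intro nn_integral_mono mult_right_mono sup) simp
  qed simp_all
  finally show ?thesis
    by (simp add: nn_integral_cmult)
qed

lemma nn_integral_powr_nn_conv_le: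
  fixes k :: "'a::{ab_group_add,countable} \<Rightarrow> ennreal"
  assumes s: "s \<ge> 1" and l1: "(\<integral>\<^sup>+z. k z \<partial>count_space UNIV) \<le> K"
  shows "(\<integral>\<^sup>+x. enn_powr (nn_conv k F x) s \<partial>count_space UNIV)
    \<le> enn_powr K (s - 1) * (K * (\<integral>\<^sup>+z. enn_powr (F z) s \<partial>count_space UNIV))"
proof -
  have "(\<integral>\<^sup>+x. enn_powr (nn_conv k F x) s \<partial>count_space UNIV)
      \<le> (\<integral>\<^sup>+x. enn_powr K (s - 1)
          * (\<integral>\<^sup>+z. k (x - z) * enn_powr (F z) s \<partial>count_space UNIV) \<partial>count_space UNIV)"
  proof (rule nn_integral_mono)
    fix x
    have "enn_powr (nn_conv k F x) s
        \<le> enn_powr (\<integral>\<^sup>+z. k (x - z) \<partial>count_space UNIV) (s - 1)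
          * (\<integral>\<^sup>+z. k (x - z) * enn_powr (F z) s \<partial>count_space UNIV)"
      unfolding nn_conv_def by (rule jensen_count_space[OF s])
    also have "\<dots> \<le> enn_powr K (s - 1) * (\<integral>\<^sup>+z. k (x - z) * enn_powr (F z) s \<partial>count_space UNIV)"
      using s l1 by (intro mult_right_mono enn_powr_mono) (simp_all add: nn_integral_count_space_reflect)
    finally show "enn_powr (nn_conv k F x) s
        \<le> enn_powr K (s - 1) * (\<integral>\<^sup>+z. k (x - z) * enn_powr (F z) s \<partial>count_space UNIV)" .
  qed
  also have "\<dots> = enn_powr K (s - 1)
      * (\<integral>\<^sup>+z. \<integral>\<^sup>+x. k (x - z) * enn_powr (F z) s \<partial>count_space UNIV \<partial>count_space UNIV)"
    using nn_integral_count_space_nn_integral[of UNIV "\<lambda>z x. k (x - z) * enn_powr (F z) s"]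
    by (simp add: nn_integral_cmult)
  also have "\<dots> = enn_powr K (s - 1)
      * (\<integral>\<^sup>+z. (\<integral>\<^sup>+z. k z \<partial>count_space UNIV) * enn_powr (F z) s \<partial>count_space UNIV)"
    by (simp add: nn_integral_multc nn_integral_count_space_translate)
  also have "\<dots> \<le> enn_powr K (s - 1) * (K * (\<integral>\<^sup>+z. enn_powr (F z) s \<partial>count_space UNIV))"
    by (intro mult_left_mono) (simp_all add: nn_integral_cmult[symmetric] nn_integral_mono mult_right_mono l1)
  finally show ?thesis .
qed

subsection \<open>Sums of powers\<close>

lemma power_powr: "(x::real) \<ge> 0 \<Longrightarrow> (x ^ k) powr q = (x powr q) ^ k"
  by (induction k) (simp_all add: powr_mult)

lemma powr_interpolation_identity:
  fixes X m r p :: real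
  assumes "X > 0" "m > 0" "r > 0" "p > 0"
  shows "(X * m powr (-1 / r)) powr (p - r) * X powr r = (X * m powr (-(1 / r - 1 / p))) powr p"
proof -
  have "(X * m powr (-1 / r)) powr (p - r) * X powr r
      = X powr (p - r) * X powr r * m powr (-1 / r * (p - r))"
    using assms by (simp add: powr_mult powr_powr)
  also have "-1 / r * (p - r) = -(1 / r - 1 / p) * p"
    using assms by (simp add: field_simps)
  also have "X powr (p - r) * X powr r = X powr p"
    by (simp flip: powr_add)
  finally show ?thesis
    using assms by (simp add: powr_mult powr_powr)
qed

lemma powr_increment_ge:
  fixes d :: real and n :: nat
  assumes d: "0 < d" "d \<le> 1" and n: "n \<ge> 1"
  shows "d * real n powr (d - 1) \<le> real n powr d - real (n - 1) powr d"
proof (cases "n = 1")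
  case True then show ?thesis using d by simp
next
  case False
  then have n2: "n \<ge> 2" using n by simp
  have "real (n - 1) powr d * real n powr (1 - d) \<le> d * real (n - 1) + (1 - d) * real n"
    using Youngs_inequality_0[of d "1 - d" "real (n - 1)" "real n"] d n2 by simp
  also have "\<dots> = real n - d" using n2 by (simp add: of_nat_diff algebra_simps)
  finally have A: "real (n - 1) powr d * real n powr (1 - d) \<le> real n - d" .
  have pos: "real n powr (1 - d) > 0" using n2 by simp
  have "real (n - 1) powr d \<le> (real n - d) / real n powr (1 - d)"
    using A pos by (simp add: field_simps)
  also have "\<dots> = real n powr d - d * real n powr (d - 1)"
    using n2 by (simp add: field_simps powr_diff powr_add[symmetric])
  finally show ?thesis by simp
qed

lemma sum_powr_le_integral:
  fixes d :: real
  assumes d: "0 < d" "d \<le> 1"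
  shows "(\<Sum>n\<in>{1..M}. real n powr (d - 1)) \<le> real M powr d / d"
proof (induction M)
  case 0 then show ?case by simp
next
  case (Suc M)
  have "(\<Sum>n\<in>{1..Suc M}. real n powr (d - 1)) = (\<Sum>n\<in>{1..M}. real n powr (d - 1)) + real (Suc M) powr (d - 1)"
    by simp
  also have "\<dots> \<le> real M powr d / d + real (Suc M) powr (d - 1)"
    using Suc by simp
  also have "\<dots> \<le> real (Suc M) powr d / d"
  proof -
    have "d * real (Suc M) powr (d - 1) \<le> real (Suc M) powr d - real M powr d"
      using powr_increment_ge[OF d, of "Suc M"] by simp
    then have "real (Suc M) powr (d - 1) \<le> (real (Suc M) powr d - real M powr d) / d"
      using d by (simp add: pos_le_divide_eq mult.commute)
    then show ?thesis by (simp add: diff_divide_distrib)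
  qed
  finally show ?case .
qed

lemma powr_neg_decrement_ge:
  fixes u :: real and n :: nat
  assumes u: "0 < u" and n: "n \<ge> 2"
  shows "u * real n powr (-1 - u) \<le> real (n - 1) powr (-u) - real n powr (-u)"
proof -
  define x where "x = 1 / real n"
  have x: "0 < x" "x < 1" using n by (auto simp: x_def)
  have "ln (1 - x) \<le> (1 - x) - 1" using x by (intro ln_le_minus_one) auto
  then have "u * ln (1 - x) \<le> u * (- x)" using u by (intro mult_left_mono) auto
  then have "1 + u * x \<le> 1 + (- u * ln (1 - x))" by simp
  also have "\<dots> \<le> exp (- u * ln (1 - x))" by (rule exp_ge_add_one_self)
  also have "\<dots> = (1 - x) powr (-u)" using x by (simp add: powr_def)
  finally have B: "1 + u * x \<le> (1 - x) powr (-u)" .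
  have "real (n - 1) = real n * (1 - x)" using n by (simp add: x_def of_nat_diff field_simps)
  then have "real (n - 1) powr (-u) = real n powr (-u) * (1 - x) powr (-u)"
    using x n by (simp add: powr_mult)
  moreover have "real n powr (-u) * (1 + u * x) \<le> real n powr (-u) * (1 - x) powr (-u)"
    using B by (intro mult_left_mono) auto
  moreover have "real n powr (-u) * (1 + u * x) = real n powr (-u) + u * real n powr (-1 - u)"
    using n by (simp add: x_def field_simps powr_diff powr_add powr_minus)
  ultimately show ?thesis by simp
qed

lemma sum_powr_tail_le:
  fixes u :: real
  assumes u: "0 < u" and K: "K \<ge> 1" and M: "M \<ge> K"
  shows "(\<Sum>n\<in>{K+1..M}. real n powr (-1 - u)) \<le> (real K powr (-u) - real M powr (-u)) / u"
  using M
proof (induction M)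
  case 0 then show ?case using K by simp
next
  case (Suc M)
  show ?case
  proof (cases "Suc M = K")
    case True then show ?thesis by simp
  next
    case False
    then have MK: "M \<ge> K" using Suc.prems by simp
    have "(\<Sum>n\<in>{K+1..Suc M}. real n powr (-1 - u)) = (\<Sum>n\<in>{K+1..M}. real n powr (-1 - u)) + real (Suc M) powr (-1 - u)"
      using MK by simp
    also have "\<dots> \<le> (real K powr (-u) - real M powr (-u)) / u + real (Suc M) powr (-1 - u)"
      using Suc.IH[OF MK] by simp
    also have "\<dots> \<le> (real K powr (-u) - real (Suc M) powr (-u)) / u"
    proof -
      have "u * real (Suc M) powr (-1 - u) \<le> real M powr (-u) - real (Suc M) powr (-u)"
        using powr_neg_decrement_ge[OF u, of "Suc M"] MK K by simp
      then have "real (Suc M) powr (-1 - u) \<le> (real M powr (-u) - real (Suc M) powr (-u)) / u"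
        using u by (simp add: pos_le_divide_eq mult.commute)
      then show ?thesis by (simp add: diff_divide_distrib)
    qed
    finally show ?thesis .
  qed
qed

lemma exists_nat_powr_bracket:
  fixes u \<rho> :: real
  assumes "u > 0" "\<rho> > 0"
  obtains K :: nat where "real K powr u \<le> \<rho>" "\<rho> \<le> real (K + 1) powr u"
proof
  define N where "N = \<rho> powr (1 / u)"
  have N: "N > 0" "N powr u = \<rho>"
    using assms by (simp_all add: N_def powr_powr)
  have "real (nat \<lfloor>N\<rfloor>) \<le> N" "N \<le> real (nat \<lfloor>N\<rfloor> + 1)"
    using N(1) by linarith+
  with N assms show "real (nat \<lfloor>N\<rfloor>) powr u \<le> \<rho>" "\<rho> \<le> real (nat \<lfloor>N\<rfloor> + 1) powr u"
    by (metis less_imp_le of_nat_0_le_iff powr_mono2)+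
qed

text \<open>\<open>g\<close> is the profile \<open>min (n\<^sup>u / \<rho>, \<rho> / n\<^sup>u) / n\<close>, cut at the crossover \<open>n\<^sup>u \<approx> \<rho>\<close>.\<close>

lemma sum_crossover_le:
  fixes u \<rho> :: real and K L :: nat
  assumes u: "0 < u" "u \<le> 1" and \<rho>: "\<rho> > 0"
    and K: "real K powr u \<le> \<rho>" "\<rho> \<le> real (K + 1) powr u"
  defines "g n \<equiv> if n \<le> K then real n powr (u - 1) / \<rho>
    else if n = K + 1 then 1 else \<rho> * real n powr (-1 - u)"
  shows "(\<Sum>n\<in>{1..L}. g n) \<le> 3 / u"
proof -
  have g_nonneg: "g n \<ge> 0" for n
    using \<rho> by (simp add: g_def)
  have "(\<Sum>n\<in>{1..L}. g n) \<le> (\<Sum>n\<in>{1..K} \<union> {K + 1} \<union> {K + 2..L}. g n)"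
    by (intro sum_mono2 g_nonneg) auto
  also have "\<dots> = (\<Sum>n\<in>{1..K}. g n) + g (K + 1) + (\<Sum>n\<in>{K + 2..L}. g n)"
    by (subst sum.union_disjoint; auto)+
  also have "(\<Sum>n\<in>{1..K}. g n) = (\<Sum>n\<in>{1..K}. real n powr (u - 1)) / \<rho>"
    by (simp add: g_def sum_divide_distrib)
  also have "\<dots> \<le> (real K powr u / u) / \<rho>"
    using sum_powr_le_integral[OF u, of K] \<rho> by (intro divide_right_mono) auto
  also have "\<dots> \<le> 1 / u"
    using K(1) u \<rho> by (simp add: field_simps)
  also have "g (K + 1) \<le> 1 / u"
    using u by (simp add: g_def)
  also have "(\<Sum>n\<in>{K + 2..L}. g n) = \<rho> * (\<Sum>n\<in>{(K + 1) + 1..L}. real n powr (-1 - u))"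
    by (simp add: g_def sum_distrib_left)
  also have "\<dots> \<le> \<rho> * (real (K + 1) powr (-u) / u)"
  proof (cases "L \<ge> K + 1")
    case True
    have "(\<Sum>n\<in>{(K + 1) + 1..L}. real n powr (-1 - u)) \<le> (real (K + 1) powr (-u) - real L powr (-u)) / u"
      using sum_powr_tail_le[OF u(1) _ True] by simp
    also have "\<dots> \<le> real (K + 1) powr (-u) / u"
      using u by (intro divide_right_mono) auto
    finally show ?thesis
      using \<rho> by (intro mult_left_mono) auto
  qed (use u \<rho> in simp)
  also have "\<dots> \<le> 1 / u"
    using K(2) u \<rho> by (simp add: powr_minus field_simps)
  finally show ?thesis
    by simp
qed

lemma le_geometric_mean_powr:
  fixes x b c R P :: real
  assumes "x \<le> n powr (-b) * P\<^sup>2" "x \<le> n powr (-c) * R\<^sup>2" "n > 0" "R \<ge> 0" "P \<ge> 0"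
  shows "x \<le> R * P * n powr (-(b + c) / 2)"
proof (cases "x \<le> 0")
  case False
  have "n powr (-b) * n powr (-c) = n powr (-(b + c) / 2 + -(b + c) / 2)"
    by (simp add: powr_add[symmetric])
  also have "\<dots> = (n powr (-(b + c) / 2))\<^sup>2"
    by (simp only: power2_eq_square powr_add)
  finally have mean: "n powr (-b) * n powr (-c) = (n powr (-(b + c) / 2))\<^sup>2" .
  have "x * x \<le> (n powr (-b) * P\<^sup>2) * (n powr (-c) * R\<^sup>2)"
    using False assms by (intro mult_mono') auto
  also have "\<dots> = (R * P)\<^sup>2 * (n powr (-b) * n powr (-c))"
    by (simp add: power_mult_distrib mult_ac)
  also have "\<dots> = (R * P * n powr (-(b + c) / 2))\<^sup>2"
    by (simp only: mean power_mult_distrib)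
  finally have "x\<^sup>2 \<le> (R * P * n powr (-(b + c) / 2))\<^sup>2"
    by (simp add: power2_eq_square)
  then show ?thesis
    by (rule power2_le_imp_le) (use assms in auto)
next
  case True
  then show ?thesis
    using assms by (meson mult_nonneg_nonneg order_trans powr_ge_zero)
qed

lemma le_crossover_profile:
  fixes x a b P R :: real and n K L :: nat
  assumes ab: "0 < b" "b < a" "a \<le> 1" and PR: "P > 0" "R > 0" and n: "n \<in> {1..L}"
    and x1: "x \<le> real n powr (-b) * P\<^sup>2" and x2: "x \<le> real n powr (-(2 * a - b)) * R\<^sup>2"
  shows "x \<le> real L powr (1 - a) * (R * P) * (if n \<le> K then real n powr ((a - b) - 1) / (R / P)
    else if n = K + 1 then 1 else R / P * real n powr (-1 - (a - b)))"
proof -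
  have \<Lambda>: "real n powr (1 - a) \<le> real L powr (1 - a)" "1 \<le> real L powr (1 - a)"
    using n ab by (auto intro: powr_mono2 ge_one_powr_ge_zero)
  consider "n \<le> K" | "n = K + 1" | "K + 2 \<le> n"
    by linarith
  then show ?thesis
  proof cases
    case 1
    have "x \<le> real n powr (1 - a) * real n powr ((a - b) - 1) * P\<^sup>2"
      using x1 n by (simp flip: powr_add)
    also have "\<dots> \<le> real L powr (1 - a) * real n powr ((a - b) - 1) * P\<^sup>2"
      using \<Lambda> by (intro mult_right_mono) auto
    also have "P\<^sup>2 = R * P / (R / P)"
      using PR by (simp add: power2_eq_square)
    finally show ?thesis
      using 1 PR by (simp add: mult_ac)
  next
    case 2
    have "x \<le> R * P * real n powr (-a)"
      using le_geometric_mean_powr[OF x1 x2] n PR by simp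
    also have "\<dots> \<le> R * P * 1"
      using n ab PR powr_mono[of "-a" 0 "real n"] by (intro mult_left_mono) auto
    also have "\<dots> \<le> real L powr (1 - a) * (R * P)"
      using \<Lambda> PR by simp
    finally show ?thesis
      using 2 by simp
  next
    case 3
    have "x \<le> real n powr (1 - a) * real n powr (-1 - (a - b)) * R\<^sup>2"
      using x2 n by (simp flip: powr_add)
    also have "\<dots> \<le> real L powr (1 - a) * real n powr (-1 - (a - b)) * R\<^sup>2"
      using \<Lambda> by (intro mult_right_mono) auto
    also have "R\<^sup>2 = R * P * (R / P)"
      using PR by (simp add: power2_eq_square)
    finally show ?thesis
      using 3 PR by (simp add: mult_ac)
  qed
qed

text \<open>Split at the crossover when \<open>a - b\<close> is large compared to \<open>1 - a\<close>; otherwise use the geometric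
  mean \<open>x\<^sub>n \<le> n\<^sup>-\<^sup>a R P\<close> of the two bounds.\<close>

lemma sum_interpolation_le:
  fixes a b P R :: real and x :: "nat \<Rightarrow> real"
  assumes ab: "0 < b" "b < a" "a \<le> 1" and PR: "P > 0" "R > 0"
    and x1: "\<And>n. n \<in> {1..L} \<Longrightarrow> x n \<le> real n powr (-b) * P\<^sup>2"
    and x2: "\<And>n. n \<in> {1..L} \<Longrightarrow> x n \<le> real n powr (-(2 * a - b)) * R\<^sup>2"
  shows "(\<Sum>n\<in>{1..L}. x n) \<le> 4 / (1 - b) * real L powr (1 - a) * R * P"
proof -
  define \<Lambda> where "\<Lambda> = real L powr (1 - a) * (R * P)"
  have \<Lambda>: "\<Lambda> \<ge> 0"
    using PR by (simp add: \<Lambda>_def)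
  have crossover: "(\<Sum>n\<in>{1..L}. x n) \<le> \<Lambda> * (3 / (a - b))"
  proof -
    obtain K where K: "real K powr (a - b) \<le> R / P" "R / P \<le> real (K + 1) powr (a - b)"
      using exists_nat_powr_bracket[of "a - b" "R / P"] ab PR by auto
    have "(\<Sum>n\<in>{1..L}. x n) \<le> \<Lambda> * (\<Sum>n\<in>{1..L}. if n \<le> K then real n powr ((a - b) - 1) / (R / P)
        else if n = K + 1 then 1 else R / P * real n powr (-1 - (a - b)))"
      unfolding \<Lambda>_def sum_distrib_left
      using le_crossover_profile[OF ab PR _ x1 x2] by (intro sum_mono) auto
    also have "\<dots> \<le> \<Lambda> * (3 / (a - b))"
      using sum_crossover_le[of "a - b" "R / P" K L] ab PR K \<Lambda> by (intro mult_left_mono) auto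
    finally show ?thesis .
  qed
  have direct: "(\<Sum>n\<in>{1..L}. x n) \<le> \<Lambda> * (1 / (1 - a))" if "a < 1"
  proof -
    have "(\<Sum>n\<in>{1..L}. x n) \<le> (\<Sum>n\<in>{1..L}. R * P * real n powr ((1 - a) - 1))"
      using le_geometric_mean_powr[OF x1 x2] PR by (intro sum_mono) auto
    also have "\<dots> = R * P * (\<Sum>n\<in>{1..L}. real n powr ((1 - a) - 1))"
      by (simp add: sum_distrib_left)
    also have "\<dots> \<le> R * P * (real L powr (1 - a) / (1 - a))"
      using sum_powr_le_integral[of "1 - a" L] that ab PR by (intro mult_left_mono) auto
    finally show ?thesis
      by (simp add: \<Lambda>_def mult_ac)
  qed
  have "(\<Sum>n\<in>{1..L}. x n) \<le> \<Lambda> * (4 / (1 - b))"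
  proof (cases "3 * (1 - a) \<le> a - b")
    case True
    then have "3 / (a - b) \<le> 4 / (1 - b)"
      using ab by (simp add: field_simps)
    with crossover \<Lambda> show ?thesis
      by (meson mult_left_mono order_trans)
  next
    case False
    then have "a < 1" "1 / (1 - a) \<le> 4 / (1 - b)"
      using ab by (simp_all add: field_simps)
    with direct \<Lambda> show ?thesis
      by (meson mult_left_mono order_trans)
  qed
  then show ?thesis
    by (simp add: \<Lambda>_def mult_ac)
qed

lemma lpnorm_ennreal:
  "s > 0 \<Longrightarrow> lpnorm (ennreal s) A f = enn_powr (\<integral>\<^sup>+x. enn_powr (f x) s \<partial>count_space A) (1 / s)"
  by (simp add: lpnorm_def)

lemma nn_integral_powr_eq_lpnorm:
  assumes "s > 0" "lpnorm (ennreal s) A f = ennreal R" "R \<ge> 0"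
  shows "(\<integral>\<^sup>+x. enn_powr (f x) s \<partial>count_space A) = ennreal (R powr s)"
proof -
  have "(\<integral>\<^sup>+x. enn_powr (f x) s \<partial>count_space A)
      = enn_powr (enn_powr (\<integral>\<^sup>+x. enn_powr (f x) s \<partial>count_space A) (1 / s)) s"
    using assms(1) by (simp add: enn_powr_powr)
  also have "\<dots> = enn_powr (ennreal R) s"
    using assms(1,2) by (simp add: lpnorm_ennreal)
  finally show ?thesis
    using assms(3) by (simp add: enn_powr_ennreal)
qed

lemma lpnorm_eq_0_iff:
  assumes "r \<ge> 1"
  shows "lpnorm r A f = 0 \<longleftrightarrow> (\<forall>x\<in>A. f x = 0)"
proof (cases "r = \<top>")
  case True
  then show ?thesis
    by (simp add: lpnorm_def flip: bot_ennreal)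
next
  case False
  then show ?thesis
    by (simp add: lpnorm_def nn_integral_count_space_eq_0_iff)
qed

lemma nn_integral_powr_square_le:
  assumes p: "p > 0" and A: "\<And>x. G x \<le> ennreal A" "A \<ge> 0" and B: "B \<ge> 0"
    and GB: "(\<integral>\<^sup>+x. enn_powr (G x) p \<partial>count_space UNIV) \<le> ennreal (B powr p)"
  shows "(\<integral>\<^sup>+x. enn_powr (G x * G x) p \<partial>count_space UNIV) \<le> ennreal ((A * B) powr p)"
proof -
  have "(\<integral>\<^sup>+x. enn_powr (G x * G x) p \<partial>count_space UNIV)
      \<le> (\<integral>\<^sup>+x. ennreal (A powr p) * enn_powr (G x) p \<partial>count_space UNIV)"
  proof (intro nn_integral_mono)
    fix x
    have "enn_powr (G x) p \<le> ennreal (A powr p)"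
      using enn_powr_mono[OF A(1)[of x], of p] p A(2) by (simp add: enn_powr_ennreal)
    then show "enn_powr (G x * G x) p \<le> ennreal (A powr p) * enn_powr (G x) p"
      using p by (simp add: enn_powr_mult mult_right_mono)
  qed
  also have "\<dots> \<le> ennreal (A powr p) * ennreal (B powr p)"
    by (simp add: nn_integral_cmult mult_left_mono GB)
  also have "\<dots> = ennreal ((A * B) powr p)"
    using A B by (simp add: ennreal_mult[symmetric] powr_mult)
  finally show ?thesis .
qed

lemma nn_integral_powr_interpolate:
  assumes r: "0 < r" "r < p" and A: "\<And>x. G x \<le> ennreal A" "A \<ge> 0"
    and B: "(\<integral>\<^sup>+x. enn_powr (G x) r \<partial>count_space UNIV) \<le> ennreal (B powr r)"
  shows "(\<integral>\<^sup>+x. enn_powr (G x) p \<partial>count_space UNIV) \<le> ennreal (A powr (p - r) * B powr r)"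
proof -
  have "(\<integral>\<^sup>+x. enn_powr (G x) p \<partial>count_space UNIV)
      = (\<integral>\<^sup>+x. enn_powr (G x) (p - r) * enn_powr (G x) r \<partial>count_space UNIV)"
    using enn_powr_add[of "p - r" r] r by simp
  also have "\<dots> \<le> (\<integral>\<^sup>+x. ennreal (A powr (p - r)) * enn_powr (G x) r \<partial>count_space UNIV)"
  proof (intro nn_integral_mono mult_right_mono)
    fix x
    show "enn_powr (G x) (p - r) \<le> ennreal (A powr (p - r))"
      using enn_powr_mono[OF A(1)[of x], of "p - r"] r A(2) by (simp add: enn_powr_ennreal)
  qed simp
  also have "\<dots> \<le> ennreal (A powr (p - r)) * ennreal (B powr r)"
    by (simp add: nn_integral_cmult mult_left_mono B)
  also have "\<dots> = ennreal (A powr (p - r) * B powr r)"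
    by (simp add: ennreal_mult[symmetric])
  finally show ?thesis .
qed

lemma le_mult_norms_if_finite:
  fixes X K R P :: ennreal
  assumes "K \<noteq> 0" "R \<noteq> 0" "P \<noteq> 0" "m > 0"
    and finite: "\<And>R' P'. R = ennreal R' \<Longrightarrow> P = ennreal P' \<Longrightarrow> R' > 0 \<Longrightarrow> P' > 0
      \<Longrightarrow> X \<le> K * ennreal R' * ennreal P' ^ m"
  shows "X \<le> K * R * P ^ m"
proof (cases "R = \<top> \<or> P = \<top>")
  case True
  with assms have "K * R * P ^ m = \<top>"
    by (auto simp: ennreal_mult_eq_top_iff power_eq_top_ennreal)
  then show ?thesis
    by simp
next
  case False
  with assms obtain R' P' where "R = ennreal R'" "P = ennreal P'" "R' > 0" "P' > 0"
    by (metis ennreal_cases ennreal_eq_0_iff not_le)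
  with finite show ?thesis
    by simp
qed

lemma conj_exp_Lpow_top:
  assumes "p > 1"
  shows "min (conj_exp \<top>) (ennreal (p / (p - 1))) * Lpow \<top> L = ennreal (real L)"
proof -
  have "1 \<le> ennreal (p / (p - 1))"
    using assms by (simp add: field_simps)
  then show ?thesis
    by (simp add: conj_exp_def Lpow_def min_absorb1)
qed

lemma conj_exp_Lpow_large:
  assumes "p > 1" "p \<le> r"
  shows "min (conj_exp (ennreal r)) (ennreal (p / (p - 1))) * Lpow (ennreal r) L
    = ennreal (r / (r - 1) * real L powr (1 - 1 / r))"
proof -
  have "r / (r - 1) \<le> p / (p - 1)"
    using assms by (simp add: field_simps)
  moreover have "conj_exp (ennreal r) = ennreal (r / (r - 1))"
    using assms by (simp add: conj_exp_def)
  ultimately show ?thesis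
    using assms by (simp add: Lpow_def min_absorb1 flip: ennreal_mult)
qed

lemma conj_exp_Lpow_small:
  assumes "1 \<le> r" "r < p"
  shows "min (conj_exp (ennreal r)) (ennreal (p / (p - 1))) * Lpow (ennreal r) L
    = ennreal (p / (p - 1) * real L powr (1 - 1 / r))"
proof -
  have "ennreal (p / (p - 1)) \<le> conj_exp (ennreal r)"
  proof (cases "r = 1")
    case False
    then have "p / (p - 1) \<le> r / (r - 1)"
      using assms by (simp add: field_simps)
    with False assms show ?thesis
      by (simp add: conj_exp_def)
  qed (simp add: conj_exp_def)
  then show ?thesis
    using assms by (simp add: Lpow_def min_absorb2 flip: ennreal_mult)
qed

subsection \<open>Diagonal sums of smoothed functions\<close>

text \<open>For the walk, \<open>k\<^sub>n(y) = q\<^sub>n(y) e\<^sup>t\<^sup>|\<^sup>y\<^sup>|\<close>, \<open>F = |f| / w\<^sub>t\<close>, \<open>\<Phi> = q\<^sup>^\<^sup>|\<^sup>f\<^sup>|\<^sup>,\<^sup>I\<^sub>L / W\<^sub>t\<close>, and \<open>a \<noteq> b\<close>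
  lie in a common block of \<open>I\<close>.\<close>

locale diagonal_setting =
  fixes k :: "nat \<Rightarrow> 'a::{ab_group_add,countable} \<Rightarrow> ennreal" and C :: real and L :: nat
    and F :: "'a \<Rightarrow> ennreal" and h :: nat and p :: real and \<Phi> :: "'a list \<Rightarrow> ennreal"
    and a b :: nat
  assumes C_pos: "C > 0"
    and kernel_l1: "\<And>n. n \<in> {1..L} \<Longrightarrow> (\<integral>\<^sup>+y. k n y \<partial>count_space UNIV) \<le> ennreal C"
    and kernel_sup: "\<And>n y. n \<in> {1..L} \<Longrightarrow> k n y \<le> ennreal (C / real n)"
    and h: "h \<ge> 2" and p: "p > 1" and ab: "a < h" "b < h" "a \<noteq> b"
    and Phi_le: "\<And>xs. length xs = h \<Longrightarrow>
      \<Phi> xs \<le> (\<Sum>n\<in>{1..L}. of_bool (xs ! a = xs ! b) * (\<Prod>i<h. nn_conv (k n) F (xs ! i)))"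
begin

abbreviation G :: "nat \<Rightarrow> 'a \<Rightarrow> ennreal" where
  "G n \<equiv> nn_conv (k n) F"

lemma G_le_lpnorm:
  assumes n: "n \<in> {1..L}" and s: "s \<ge> 1"
    and R: "lpnorm (ennreal s) UNIV F = ennreal R" "R \<ge> 0"
  shows "G n x \<le> ennreal (C * real n powr (-1 / s) * R)"
proof -
  have "enn_powr (G n x) s \<le> ennreal (C powr (s - 1) * (C / real n * R powr s))"
    using powr_nn_conv_le[OF s kernel_l1[OF n] kernel_sup[OF n], where F = F and x = x]
      nn_integral_powr_eq_lpnorm[OF _ R] s C_pos
    by (simp add: enn_powr_ennreal ennreal_mult[symmetric])
  also have "C powr (s - 1) * (C / real n * R powr s) = (C * real n powr (-1 / s) * R) powr s"
  proof -
    have "(C * real n powr (-1 / s) * R) powr s = C powr s * real n powr (-1) * R powr s"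
      using C_pos n s R(2) by (simp add: powr_mult powr_powr)
    also have "C powr s = C powr (s - 1) * C"
      using C_pos by (simp add: powr_diff)
    finally show ?thesis
      using n by (simp add: powr_minus field_simps)
  qed
  finally show ?thesis
    using s C_pos R(2) by (subst (asm) enn_powr_le_ennreal_iff) auto
qed

lemma nn_integral_powr_G_le:
  assumes n: "n \<in> {1..L}" and s: "s \<ge> 1"
    and R: "lpnorm (ennreal s) UNIV F = ennreal R" "R \<ge> 0"
  shows "(\<integral>\<^sup>+x. enn_powr (G n x) s \<partial>count_space UNIV) \<le> ennreal ((C * R) powr s)"
proof -
  have "(\<integral>\<^sup>+x. enn_powr (G n x) s \<partial>count_space UNIV) \<le> ennreal (C powr (s - 1) * (C * R powr s))"
    using nn_integral_powr_nn_conv_le[OF s kernel_l1[OF n], where F = F]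
      nn_integral_powr_eq_lpnorm[OF _ R] s C_pos
    by (simp add: enn_powr_ennreal ennreal_mult[symmetric])
  also have "C powr (s - 1) * (C * R powr s) = (C * R) powr s"
  proof -
    have "C powr s = C powr (s - 1) * C"
      using C_pos by (simp add: powr_diff)
    then show ?thesis
      using C_pos R(2) by (simp add: powr_mult)
  qed
  finally show ?thesis .
qed

lemma lpnorm_Phi_eq_0:
  assumes "L = 0 \<or> (\<forall>z. F z = 0)"
  shows "lpnorm (ennreal p) {xs. length xs = h} \<Phi> = 0"
proof -
  have "(\<Prod>i<h. G n (xs ! i)) = 0" if "\<forall>z. F z = 0" for n xs
    using that h by (intro prod_zero bexI[of _ 0]) (auto simp: nn_conv_def)
  with assms have "(\<Sum>n\<in>{1..L}. of_bool (xs ! a = xs ! b) * (\<Prod>i<h. G n (xs ! i))) = 0" for xs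
    by auto
  with Phi_le have "\<Phi> xs = 0" if "length xs = h" for xs
    using that by (metis le_zero_eq)
  then show ?thesis
    using p by (simp add: lpnorm_eq_0_iff)
qed

lemma lpnorm_Phi_le_sum:
  assumes P: "lpnorm (ennreal p) UNIV F = ennreal P" "P \<ge> 0"
    and c: "\<And>n. n \<in> {1..L} \<Longrightarrow> c n > 0"
    and square: "\<And>n. n \<in> {1..L} \<Longrightarrow>
      (\<integral>\<^sup>+x. enn_powr (G n x * G n x) p \<partial>count_space UNIV) \<le> ennreal (c n powr p)"
    and sum: "(\<Sum>n\<in>{1..L}. c n) \<le> C * C * X * P"
  shows "lpnorm (ennreal p) {xs. length xs = h} \<Phi> \<le> ennreal (C ^ h * X * P ^ (h - 1))"
proof -
  define S where "S = (\<Sum>n\<in>{1..L}. c n)"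
  have S: "S \<ge> 0"
    unfolding S_def by (intro sum_nonneg less_imp_le c)
  have CP: "C * P \<ge> 0"
    using C_pos P by simp
  have "(\<integral>\<^sup>+xs. enn_powr (\<Phi> xs) p \<partial>count_space {xs. length xs = h})
      \<le> ennreal ((C * P) powr p) ^ (h - 2)
        * (\<integral>\<^sup>+x. enn_powr (\<Sum>n\<in>{1..L}. G n x * G n x) p \<partial>count_space UNIV)"
    using p P by (intro diagonal_sum_powr_bound[OF _ p ab Phi_le] nn_integral_powr_G_le) auto
  also have "\<dots> \<le> ennreal ((C * P) powr p) ^ (h - 2) * ennreal (S powr p)"
    unfolding S_def by (intro mult_left_mono minkowski_sum_count_space[OF _ p c square]) auto
  also have "\<dots> = ennreal (((C * P) ^ (h - 2) * S) powr p)"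
    using CP S by (simp add: ennreal_power ennreal_mult[symmetric] powr_mult power_powr)
  finally have "enn_powr (lpnorm (ennreal p) {xs. length xs = h} \<Phi>) p
      \<le> ennreal (((C * P) ^ (h - 2) * S) powr p)"
    using p by (simp add: lpnorm_ennreal enn_powr_powr)
  then have "lpnorm (ennreal p) {xs. length xs = h} \<Phi> \<le> ennreal ((C * P) ^ (h - 2) * S)"
    using p CP S by (simp add: enn_powr_le_ennreal_iff)
  also have "(C * P) ^ (h - 2) * S \<le> (C * P) ^ (h - 2) * (C * C * X * P)"
    using sum CP by (simp add: S_def mult_left_mono)
  also have "\<dots> = C ^ h * X * P ^ (h - 1)"
  proof -
    obtain m where "h = m + 2"
      using h by (metis add.commute le_Suc_ex)
    then show ?thesis
      by (simp add: power_mult_distrib algebra_simps)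
  qed
  finally show ?thesis
    by (simp add: ennreal_leI)
qed

lemma lpnorm_Phi_le_sup:
  assumes M: "(SUP z. F z) = ennreal M" "M > 0" and P: "lpnorm (ennreal p) UNIV F = ennreal P" "P > 0"
  shows "lpnorm (ennreal p) {xs. length xs = h} \<Phi> \<le> ennreal (C ^ h * (4 * real L * M) * P ^ (h - 1))"
proof (rule lpnorm_Phi_le_sum[OF P(1) less_imp_le[OF P(2)]])
  show "C * M * (C * P) > 0"
    using C_pos M P by simp
  show "(\<integral>\<^sup>+x. enn_powr (G n x * G n x) p \<partial>count_space UNIV) \<le> ennreal ((C * M * (C * P)) powr p)"
    if n: "n \<in> {1..L}" for n
  proof (rule nn_integral_powr_square_le)
    show "G n x \<le> ennreal (C * M)" for x
      using nn_conv_le_SUP[OF kernel_l1[OF n], where F = F and x = x] M C_pos by (simp add: ennreal_mult)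
    show "(\<integral>\<^sup>+x. enn_powr (G n x) p \<partial>count_space UNIV) \<le> ennreal ((C * P) powr p)"
      using nn_integral_powr_G_le[OF n _ P(1)] p P(2) by simp
  qed (use p C_pos M P in auto)
  have "0 \<le> C * C * real L * M * P"
    using C_pos M P by simp
  then show "(\<Sum>n\<in>{1..L}. C * M * (C * P)) \<le> C * C * (4 * real L * M) * P"
    by (simp add: mult_ac)
qed

lemma lpnorm_Phi_le_large_r:
  assumes r: "p \<le> r" and R: "lpnorm (ennreal r) UNIV F = ennreal R" "R > 0"
    and P: "lpnorm (ennreal p) UNIV F = ennreal P" "P > 0"
  shows "lpnorm (ennreal p) {xs. length xs = h} \<Phi>
    \<le> ennreal (C ^ h * (4 * (r / (r - 1) * real L powr (1 - 1 / r)) * R) * P ^ (h - 1))"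
proof (rule lpnorm_Phi_le_sum[OF P(1) less_imp_le[OF P(2)]])
  have r1: "r > 1"
    using r p by simp
  show "C * real n powr (-1 / r) * R * (C * P) > 0" if "n \<in> {1..L}" for n
    using C_pos R P that by simp
  show "(\<integral>\<^sup>+x. enn_powr (G n x * G n x) p \<partial>count_space UNIV)
      \<le> ennreal ((C * real n powr (-1 / r) * R * (C * P)) powr p)" if n: "n \<in> {1..L}" for n
  proof (rule nn_integral_powr_square_le)
    show "G n x \<le> ennreal (C * real n powr (-1 / r) * R)" for x
      using G_le_lpnorm[OF n _ R(1)] r1 R(2) by simp
    show "(\<integral>\<^sup>+x. enn_powr (G n x) p \<partial>count_space UNIV) \<le> ennreal ((C * P) powr p)"
      using nn_integral_powr_G_le[OF n _ P(1)] p P(2) by simp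
  qed (use p C_pos R P in auto)
  have "(\<Sum>n\<in>{1..L}. real n powr (-1 / r)) \<le> real L powr (1 - 1 / r) / (1 - 1 / r)"
    using sum_powr_le_integral[of "1 - 1 / r" L] r1 by simp
  also have "\<dots> = r / (r - 1) * real L powr (1 - 1 / r)"
    using r1 by (simp add: field_simps)
  also have "\<dots> \<le> 4 * (r / (r - 1) * real L powr (1 - 1 / r))"
    using r1 mult_right_mono[of 1 4 "r / (r - 1) * real L powr (1 - 1 / r)"] by simp
  finally have "C * C * R * P * (\<Sum>n\<in>{1..L}. real n powr (-1 / r))
      \<le> C * C * R * P * (4 * (r / (r - 1) * real L powr (1 - 1 / r)))"
    using C_pos R P by (intro mult_left_mono) auto
  then show "(\<Sum>n\<in>{1..L}. C * real n powr (-1 / r) * R * (C * P))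
      \<le> C * C * (4 * (r / (r - 1) * real L powr (1 - 1 / r)) * R) * P"
    by (simp add: sum_distrib_left mult_ac)
qed

lemma nn_integral_powr_G_le_interpolated:
  assumes n: "n \<in> {1..L}" and r: "1 \<le> r" "r < p" and R: "lpnorm (ennreal r) UNIV F = ennreal R" "R > 0"
  shows "(\<integral>\<^sup>+x. enn_powr (G n x) p \<partial>count_space UNIV)
    \<le> ennreal ((C * R * real n powr (-(1 / r - 1 / p))) powr p)"
proof -
  have "(\<integral>\<^sup>+x. enn_powr (G n x) p \<partial>count_space UNIV)
      \<le> ennreal ((C * real n powr (-1 / r) * R) powr (p - r) * (C * R) powr r)"
    using nn_integral_powr_interpolate[OF _ r(2) G_le_lpnorm[OF n r(1) R(1)]]
      nn_integral_powr_G_le[OF n r(1) R(1)] r n C_pos R(2) by auto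
  also have "(C * real n powr (-1 / r) * R) powr (p - r) * (C * R) powr r
      = (C * R * real n powr (-(1 / r - 1 / p))) powr p"
    using powr_interpolation_identity[of "C * R" "real n" r p] n r C_pos R(2)
    by (simp add: mult_ac)
  finally show ?thesis .
qed

text \<open>For \<open>r < p\<close> each \<open>\<parallel>G\<^sub>n\<^sup>2\<parallel>\<^sub>p\<close> is bounded in two ways, through \<open>\<parallel>F\<parallel>\<^sub>p\<close> alone and through
  \<open>\<parallel>F\<parallel>\<^sub>r\<close> alone (interpolating \<open>\<parallel>G\<^sub>n\<parallel>\<^sub>p\<close> between \<open>\<parallel>G\<^sub>n\<parallel>\<^sub>r\<close> and \<open>\<parallel>G\<^sub>n\<parallel>\<^sub>\<infinity>\<close>), and the smaller
  of the two is summed.\<close>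

lemma lpnorm_Phi_le_small_r:
  assumes r: "1 \<le> r" "r < p" and R: "lpnorm (ennreal r) UNIV F = ennreal R" "R > 0"
    and P: "lpnorm (ennreal p) UNIV F = ennreal P" "P > 0"
  shows "lpnorm (ennreal p) {xs. length xs = h} \<Phi>
    \<le> ennreal (C ^ h * (4 * (p / (p - 1) * real L powr (1 - 1 / r)) * R) * P ^ (h - 1))"
proof -
  define A1 where "A1 n = C * real n powr (-1 / p) * P" for n :: nat
  define A2 where "A2 n = C * real n powr (-1 / r) * R" for n :: nat
  define B2 where "B2 n = C * R * real n powr (-(1 / r - 1 / p))" for n :: nat
  define c where "c n = min (A1 n * (C * P)) (A2 n * B2 n)" for n :: nat
  have pos: "A1 n > 0" "A2 n > 0" "B2 n > 0" if "n \<in> {1..L}" for n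
    using that C_pos P R by (auto simp: A1_def A2_def B2_def)
  have G1: "G n x \<le> ennreal (A1 n)" if "n \<in> {1..L}" for n x
    using G_le_lpnorm[OF that _ P(1)] p P(2) by (simp add: A1_def)
  have G2: "G n x \<le> ennreal (A2 n)" if "n \<in> {1..L}" for n x
    using G_le_lpnorm[OF that r(1) R(1)] R(2) by (simp add: A2_def)
  show ?thesis
  proof (rule lpnorm_Phi_le_sum[OF P(1) less_imp_le[OF P(2)]])
    show "c n > 0" if "n \<in> {1..L}" for n
      using pos[OF that] C_pos P by (simp add: c_def)
    show "(\<integral>\<^sup>+x. enn_powr (G n x * G n x) p \<partial>count_space UNIV) \<le> ennreal (c n powr p)"
      if n: "n \<in> {1..L}" for n
    proof -
      have "(\<integral>\<^sup>+x. enn_powr (G n x * G n x) p \<partial>count_space UNIV) \<le> ennreal ((A1 n * (C * P)) powr p)"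
        using pos[OF n] p P C_pos nn_integral_powr_G_le[OF n _ P(1)]
        by (intro nn_integral_powr_square_le G1[OF n]) auto
      moreover have "(\<integral>\<^sup>+x. enn_powr (G n x * G n x) p \<partial>count_space UNIV) \<le> ennreal ((A2 n * B2 n) powr p)"
        using pos[OF n] p nn_integral_powr_G_le_interpolated[OF n r R]
        by (intro nn_integral_powr_square_le G2[OF n]) (auto simp: B2_def)
      ultimately show ?thesis
        by (simp add: c_def min_def)
    qed
    have "(\<Sum>n\<in>{1..L}. c n) \<le> 4 / (1 - 1 / p) * real L powr (1 - 1 / r) * (C * R) * (C * P)"
    proof (rule sum_interpolation_le)
      show "0 < 1 / p" "1 / p < 1 / r" "1 / r \<le> 1"
        using p r by (auto simp: field_simps)
      show "C * P > 0" "C * R > 0"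
        using C_pos P R by auto
      show "c n \<le> real n powr (-(1 / p)) * (C * P)\<^sup>2" if "n \<in> {1..L}" for n
        by (simp add: c_def A1_def power2_eq_square mult_ac)
      show "c n \<le> real n powr (-(2 * (1 / r) - 1 / p)) * (C * R)\<^sup>2" if "n \<in> {1..L}" for n
      proof -
        have "A2 n * B2 n = (C * R)\<^sup>2 * (real n powr (-1 / r) * real n powr (-(1 / r - 1 / p)))"
          by (simp add: A2_def B2_def power2_eq_square mult_ac)
        also have "real n powr (-1 / r) * real n powr (-(1 / r - 1 / p)) = real n powr (-(2 * (1 / r) - 1 / p))"
          by (simp add: diff_divide_distrib flip: powr_add)
        finally show ?thesis
          by (simp add: c_def mult_ac)
      qed
    qed
    also have "4 / (1 - 1 / p) = 4 * (p / (p - 1))"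
      using p by (simp add: field_simps)
    finally show "(\<Sum>n\<in>{1..L}. c n) \<le> C * C * (4 * (p / (p - 1) * real L powr (1 - 1 / r)) * R) * P"
      by (simp add: mult_ac)
  qed
qed

lemma lpnorm_Phi_le_if_finite:
  assumes r: "r \<ge> 1" and F: "\<exists>z. F z \<noteq> 0"
    and \<kappa>: "min (conj_exp r) (ennreal (p / (p - 1))) * Lpow r L = ennreal \<kappa>" "\<kappa> > 0"
    and bound: "\<And>R P. lpnorm r UNIV F = ennreal R \<Longrightarrow> lpnorm (ennreal p) UNIV F = ennreal P
      \<Longrightarrow> R > 0 \<Longrightarrow> P > 0
      \<Longrightarrow> lpnorm (ennreal p) {xs. length xs = h} \<Phi> \<le> ennreal (C ^ h * (4 * \<kappa> * R) * P ^ (h - 1))"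
  shows "lpnorm (ennreal p) {xs. length xs = h} \<Phi>
    \<le> ennreal (4 * C ^ h) * min (conj_exp r) (ennreal (p / (p - 1))) * Lpow r L
      * lpnorm r UNIV F * lpnorm (ennreal p) UNIV F ^ (h - 1)"
proof -
  have "ennreal (4 * C ^ h) * min (conj_exp r) (ennreal (p / (p - 1))) * Lpow r L
      = ennreal (4 * C ^ h) * ennreal \<kappa>"
    using \<kappa>(1) by (simp add: mult.assoc)
  moreover have "lpnorm (ennreal p) {xs. length xs = h} \<Phi>
      \<le> ennreal (4 * C ^ h) * ennreal \<kappa> * lpnorm r UNIV F * lpnorm (ennreal p) UNIV F ^ (h - 1)"
  proof (rule le_mult_norms_if_finite)
    show "ennreal (4 * C ^ h) * ennreal \<kappa> \<noteq> 0" "h - 1 > 0"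
      using \<kappa>(2) C_pos h by auto
    show "lpnorm r UNIV F \<noteq> 0" "lpnorm (ennreal p) UNIV F \<noteq> 0"
      using r p F by (auto simp: lpnorm_eq_0_iff)
    show "lpnorm (ennreal p) {xs. length xs = h} \<Phi>
        \<le> ennreal (4 * C ^ h) * ennreal \<kappa> * ennreal R * ennreal P ^ (h - 1)"
      if "lpnorm r UNIV F = ennreal R" "lpnorm (ennreal p) UNIV F = ennreal P" "R > 0" "P > 0" for R P
      using bound[OF that] that C_pos \<kappa>(2)
      by (simp add: ennreal_power mult_ac flip: ennreal_mult)
  qed
  ultimately show ?thesis
    by simp
qed

lemma lpnorm_Phi_le:
  assumes r: "r \<ge> 1"
  shows "lpnorm (ennreal p) {xs. length xs = h} \<Phi>
    \<le> ennreal (4 * C ^ h) * min (conj_exp r) (ennreal (p / (p - 1))) * Lpow r L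
      * lpnorm r UNIV F * lpnorm (ennreal p) UNIV F ^ (h - 1)"
proof (cases "L = 0 \<or> (\<forall>z. F z = 0)")
  case True
  then show ?thesis
    by (simp add: lpnorm_Phi_eq_0)
next
  case False
  then have L: "L \<ge> 1" and F: "\<exists>z. F z \<noteq> 0"
    by auto
  consider "r = \<top>" | r' where "r = ennreal r'" "p \<le> r'" | r' where "r = ennreal r'" "1 \<le> r'" "r' < p"
  proof (cases r)
    case (real r')
    with r have "1 \<le> r'"
      by (metis ennreal_1 ennreal_le_iff)
    with real that(2,3) show ?thesis
      by (cases "p \<le> r'") auto
  qed (use that in auto)
  then show ?thesis
  proof cases
    case 1
    show ?thesis
    proof (rule lpnorm_Phi_le_if_finite[OF r F])
      show "min (conj_exp r) (ennreal (p / (p - 1))) * Lpow r L = ennreal (real L)"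
        using 1 p by (simp add: conj_exp_Lpow_top)
      show "lpnorm (ennreal p) {xs. length xs = h} \<Phi> \<le> ennreal (C ^ h * (4 * real L * R) * P ^ (h - 1))"
        if "lpnorm r UNIV F = ennreal R" "lpnorm (ennreal p) UNIV F = ennreal P" "R > 0" "P > 0" for R P
        using that 1 by (intro lpnorm_Phi_le_sup) (simp_all add: lpnorm_def)
    qed (use L in auto)
  next
    case (2 r')
    show ?thesis
    proof (rule lpnorm_Phi_le_if_finite[OF r F])
      show "min (conj_exp r) (ennreal (p / (p - 1))) * Lpow r L
          = ennreal (r' / (r' - 1) * real L powr (1 - 1 / r'))"
        using 2 p by (simp add: conj_exp_Lpow_large)
      show "lpnorm (ennreal p) {xs. length xs = h} \<Phi>
          \<le> ennreal (C ^ h * (4 * (r' / (r' - 1) * real L powr (1 - 1 / r')) * R) * P ^ (h - 1))"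
        if "lpnorm r UNIV F = ennreal R" "lpnorm (ennreal p) UNIV F = ennreal P" "R > 0" "P > 0" for R P
        using that 2 by (intro lpnorm_Phi_le_large_r) simp_all
    qed (use L 2 p in auto)
  next
    case (3 r')
    show ?thesis
    proof (rule lpnorm_Phi_le_if_finite[OF r F])
      show "min (conj_exp r) (ennreal (p / (p - 1))) * Lpow r L
          = ennreal (p / (p - 1) * real L powr (1 - 1 / r'))"
        using 3 by (simp add: conj_exp_Lpow_small)
      show "lpnorm (ennreal p) {xs. length xs = h} \<Phi>
          \<le> ennreal (C ^ h * (4 * (p / (p - 1) * real L powr (1 - 1 / r')) * R) * P ^ (h - 1))"
        if "lpnorm r UNIV F = ennreal R" "lpnorm (ennreal p) UNIV F = ennreal P" "R > 0" "P > 0" for R P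
        using that 3 by (intro lpnorm_Phi_le_small_r) simp_all
    qed (use L p in auto)
  qed
qed

end

subsection \<open>The random walk\<close>

lemma zn_triangle: "zn x \<le> zn (x - z) + zn z"
proof -
  have norm: "zn v = cmod (Complex (real_of_int (fst v)) (real_of_int (snd v)))" for v
    by (simp add: zn_def cmod_def)
  have "Complex (real_of_int (fst x)) (real_of_int (snd x))
      = Complex (real_of_int (fst (x - z))) (real_of_int (snd (x - z)))
        + Complex (real_of_int (fst z)) (real_of_int (snd z))"
    by (simp add: complex_eq_iff)
  then show ?thesis
    unfolding norm by (metis norm_triangle_ineq)
qed

lemma wt_pos: "wt t x > 0"
  by (simp add: wt_def)

lemma inverse_wt_le:
  assumes "t \<ge> 0"
  shows "1 / wt t x \<le> exp (t * zn (x - z)) * (1 / wt t z)"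
proof -
  have "t * zn x \<le> t * zn (x - z) + t * zn z"
    using zn_triangle[of x z] assms by (simp add: mult_left_mono flip: distrib_left)
  then have "exp (t * zn x) \<le> exp (t * zn (x - z) + t * zn z)"
    by simp
  then show ?thesis
    by (simp add: wt_def exp_minus exp_add field_simps)
qed

lemma divide_ennreal_pos: "0 < c \<Longrightarrow> X / ennreal c = X * ennreal (1 / c)"
  by (simp add: divide_ennreal_def inverse_ennreal divide_inverse)

definition walk_kernel :: "(int \<times> int) pmf \<Rightarrow> real \<Rightarrow> nat \<Rightarrow> int \<times> int \<Rightarrow> ennreal" where
  "walk_kernel q1 t n y = ennreal (pmf (walk q1 n) y * exp (t * zn y))"

lemma nn_integral_walk_kernel:
  "(\<integral>\<^sup>+y. walk_kernel q1 t n y \<partial>count_space UNIV)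
    = (\<integral>\<^sup>+y. ennreal (exp (t * zn y)) \<partial>measure_pmf (walk q1 n))"
  by (simp add: walk_kernel_def nn_integral_measure_pmf ennreal_mult)

lemma qabs_div_wt_le:
  assumes t: "t \<ge> 0"
  shows "qabs q1 n f x / ennreal (wt t x) \<le> nn_conv (walk_kernel q1 t n) (\<lambda>z. ennreal (\<bar>f z\<bar> / wt t z)) x"
proof -
  have "qabs q1 n f x / ennreal (wt t x)
      = (\<integral>\<^sup>+z. ennreal (pmf (walk q1 n) (x - z) * \<bar>f z\<bar>) * ennreal (1 / wt t x) \<partial>count_space UNIV)"
    unfolding qabs_def by (simp add: divide_ennreal_pos wt_pos nn_integral_multc)
  also have "\<dots> \<le> (\<integral>\<^sup>+z. walk_kernel q1 t n (x - z) * ennreal (\<bar>f z\<bar> / wt t z) \<partial>count_space UNIV)"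
  proof (intro nn_integral_mono)
    fix z
    have "pmf (walk q1 n) (x - z) * \<bar>f z\<bar> * (1 / wt t x)
        \<le> pmf (walk q1 n) (x - z) * \<bar>f z\<bar> * (exp (t * zn (x - z)) * (1 / wt t z))"
      using inverse_wt_le[OF t, of x z] by (intro mult_left_mono) auto
    then have "ennreal (pmf (walk q1 n) (x - z) * \<bar>f z\<bar> * (1 / wt t x))
        \<le> ennreal (pmf (walk q1 n) (x - z) * exp (t * zn (x - z)) * (\<bar>f z\<bar> / wt t z))"
      by (intro ennreal_leI) (simp add: mult_ac)
    then show "ennreal (pmf (walk q1 n) (x - z) * \<bar>f z\<bar>) * ennreal (1 / wt t x)
        \<le> walk_kernel q1 t n (x - z) * ennreal (\<bar>f z\<bar> / wt t z)"
      by (simp add: walk_kernel_def ennreal_mult[symmetric] wt_pos less_imp_le)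
  qed
  finally show ?thesis
    by (simp add: nn_conv_def)
qed

lemma qhat_div_Wt_le:
  assumes t: "t \<ge> 0" and len: "length xs = h" and pair: "sim xs I \<Longrightarrow> xs ! a = xs ! b"
  shows "qhat q1 f I L xs / ennreal (Wt t xs)
    \<le> (\<Sum>n\<in>{1..L}. of_bool (xs ! a = xs ! b)
        * (\<Prod>i<h. nn_conv (walk_kernel q1 t n) (\<lambda>z. ennreal (\<bar>f z\<bar> / wt t z)) (xs ! i)))"
proof -
  have "ennreal (1 / Wt t xs) = (\<Prod>i<h. ennreal (1 / wt t (xs ! i)))"
    using len by (simp add: Wt_def prod_dividef prod_ennreal wt_pos less_imp_le)
  then have "qhat q1 f I L xs / ennreal (Wt t xs)
      = (\<Sum>n\<in>{1..L}. of_bool (sim xs I) * (\<Prod>i<h. qabs q1 n f (xs ! i) / ennreal (wt t (xs ! i))))"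
    using len by (simp add: qhat_def divide_ennreal_pos Wt_def wt_pos prod_pos sum_distrib_right
        prod.distrib)
  also have "\<dots> \<le> (\<Sum>n\<in>{1..L}. of_bool (xs ! a = xs ! b)
      * (\<Prod>i<h. nn_conv (walk_kernel q1 t n) (\<lambda>z. ennreal (\<bar>f z\<bar> / wt t z)) (xs ! i)))"
    using pair by (intro sum_mono mult_mono prod_mono_ennreal qabs_div_wt_le[OF t]) auto
  finally show ?thesis .
qed

lemma partition_on_ne_star_obtains_pair:
  assumes I: "partition_on {..<h} I" "I \<noteq> star h"
  obtains a b where "a < h" "b < h" "a \<noteq> b" "\<And>xs. sim xs I \<Longrightarrow> xs ! a = xs ! b"
proof -
  have "\<exists>B\<in>I. \<exists>a\<in>B. \<exists>b\<in>B. a \<noteq> b"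
  proof (rule ccontr)
    assume "\<not> ?thesis"
    then have singleton: "B = {i}" if "B \<in> I" "i \<in> B" for B i
      using that by blast
    have "I = star h"
    proof (intro equalityI subsetI)
      fix B
      assume "B \<in> I"
      moreover obtain i where "i \<in> B"
        using \<open>B \<in> I\<close> I(1) by (force simp: partition_on_def)
      ultimately have "B = {i}" "i < h"
        using singleton I(1) by (auto simp: partition_on_def)
      then show "B \<in> star h"
        by (auto simp: star_def)
    next
      fix B
      assume "B \<in> star h"
      then obtain i where i: "B = {i}" "i < h"
        by (auto simp: star_def)
      with I(1) have "i \<in> \<Union>I"
        by (simp add: partition_on_def)
      then obtain B' where B': "B' \<in> I" "i \<in> B'"
        by blast
      with singleton[OF B'] i show "B \<in> I"
        by simp
    qed
    with I(2) show False ..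
  qed
  then obtain B a b where B: "B \<in> I" "a \<in> B" "b \<in> B" "a \<noteq> b"
    by blast
  with I(1) have "a < h" "b < h"
    by (auto simp: partition_on_def)
  moreover have "xs ! a = xs ! b" if "sim xs I" for xs
    using that B unfolding sim_def by blast
  ultimately show ?thesis
    using that B(4) by blast
qed

lemma walk_kernel_le:
  assumes "exp (t * zn y) * pmf (walk q1 n) y \<le> B / real n" "B \<le> C"
  shows "walk_kernel q1 t n y \<le> ennreal (C / real n)"
proof -
  have "exp (t * zn y) * pmf (walk q1 n) y \<le> C / real n"
    using assms by (meson divide_right_mono of_nat_0_le_iff order_trans)
  then show ?thesis
    unfolding walk_kernel_def by (intro ennreal_leI) (simp add: mult.commute)
qed

lemma lpnorm_qhat_div_Wt_le:
  assumes C: "C > 0"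
    and l1: "\<And>n. n \<in> {1..L} \<Longrightarrow> (\<integral>\<^sup>+y. walk_kernel q1 t n y \<partial>count_space UNIV) \<le> ennreal C"
    and sup: "\<And>n y. n \<in> {1..L} \<Longrightarrow> walk_kernel q1 t n y \<le> ennreal (C / real n)"
    and t: "t \<ge> 0" and h: "h \<ge> 2" and p: "p > 1"
    and I: "partition_on {..<h} I" "I \<noteq> star h" and r: "r \<ge> 1"
  shows "lpnorm (ennreal p) {xs. length xs = h} (\<lambda>xs. qhat q1 f I L xs / ennreal (Wt t xs))
    \<le> ennreal (4 * C ^ h) * min (conj_exp r) (ennreal (p / (p - 1))) * Lpow r L
      * lpnorm r UNIV (\<lambda>x. ennreal (\<bar>f x\<bar> / wt t x))
      * lpnorm (ennreal p) UNIV (\<lambda>x. ennreal (\<bar>f x\<bar> / wt t x)) ^ (h - 1)"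
proof -
  obtain a b where ab: "a < h" "b < h" "a \<noteq> b" "\<And>xs. sim xs I \<Longrightarrow> xs ! a = xs ! b"
    using partition_on_ne_star_obtains_pair[OF I] by blast
  interpret diagonal_setting "walk_kernel q1 t" C L "\<lambda>x. ennreal (\<bar>f x\<bar> / wt t x)" h p
    "\<lambda>xs. qhat q1 f I L xs / ennreal (Wt t xs)" a b
    by unfold_locales (fact C l1 sup h p ab(1-3) | erule qhat_div_Wt_le[OF t _ ab(4)])+
  show ?thesis
    by (rule lpnorm_Phi_le[OF r])
qed

theorem proposition4p19:
  fixes q1 :: "(int \<times> int) pmf" and c cc t p :: real and h L :: nat
    and f :: "int \<times> int \<Rightarrow> real"
  assumes sym: "\<And>x. pmf q1 x = pmf q1 (- x)"
    and c_pos: "c > 0"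
    and subG1: "\<And>s::real. (\<integral>\<^sup>+ x. ennreal (exp (s * real_of_int (fst x))) \<partial>measure_pmf q1)
                    \<le> ennreal (exp (c * s\<^sup>2 / 2))"
    and subG2: "\<And>s::real. (\<integral>\<^sup>+ x. ennreal (exp (s * real_of_int (snd x))) \<partial>measure_pmf q1)
                    \<le> ennreal (exp (c * s\<^sup>2 / 2))"
    and cc_ge: "cc \<ge> 1"
    and cc1: "\<And>s n. s \<ge> 0 \<Longrightarrow> n \<ge> 1 \<Longrightarrow>
       (\<integral>\<^sup>+ x. ennreal (exp (s * real_of_int (fst x))) \<partial>measure_pmf (walk q1 n))
         \<le> ennreal (exp (cc * s\<^sup>2 * real n / 2)) \<and>
       (\<integral>\<^sup>+ x. ennreal (exp (s * real_of_int (snd x))) \<partial>measure_pmf (walk q1 n))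
         \<le> ennreal (exp (cc * s\<^sup>2 * real n / 2))"
    and cc2: "\<And>s n. s \<ge> 0 \<Longrightarrow> n \<ge> 1 \<Longrightarrow>
       (\<integral>\<^sup>+ x. ennreal (exp (s * real_of_int (fst x)) * pmf (walk q1 n) x ^ 2
                          / pmf (walk q1 (2 * n)) (0, 0)) \<partial>count_space UNIV)
         \<le> ennreal (exp (cc * s\<^sup>2 * real n / 2)) \<and>
       (\<integral>\<^sup>+ x. ennreal (exp (s * real_of_int (snd x)) * pmf (walk q1 n) x ^ 2
                          / pmf (walk q1 (2 * n)) (0, 0)) \<partial>count_space UNIV)
         \<le> ennreal (exp (cc * s\<^sup>2 * real n / 2))"
    and cc3: "\<And>s n. s \<ge> 0 \<Longrightarrow> n \<ge> 1 \<Longrightarrow>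
       (\<integral>\<^sup>+ x. ennreal (exp (s * zn x)) \<partial>measure_pmf (walk q1 n))
         \<le> ennreal (cc * exp (2 * cc * s\<^sup>2 * real n))"
    and cc4: "\<And>s n x. s \<ge> 0 \<Longrightarrow> n \<ge> 1 \<Longrightarrow>
       exp (s * zn x) * pmf (walk q1 n) x \<le> cc * exp (2 * cc * s\<^sup>2 * real n) / real n"
    and h: "h \<ge> 2" and t: "t \<ge> 0" and p: "1 < p"
  shows
   "(\<forall>I. partition_on {..<h} I \<and> I \<noteq> star h \<longrightarrow>
       lpnorm (ennreal p) {xs. length xs = h} (\<lambda>xs. qhat q1 f I L xs / ennreal (Wt t xs))
       \<le> ennreal (4 * (cc * exp (2 * cc * t\<^sup>2 * real L)) ^ h * real L)
           * lpnorm \<top> UNIV (\<lambda>x. ennreal (\<bar>f x\<bar> / wt t x))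
           * lpnorm (ennreal p) UNIV (\<lambda>x. ennreal (\<bar>f x\<bar> / wt t x)) ^ (h - 1))
    \<and>
    (\<forall>r::ennreal. r \<ge> 1 \<longrightarrow> (\<forall>I. partition_on {..<h} I \<and> I \<noteq> star h \<longrightarrow>
       lpnorm (ennreal p) {xs. length xs = h} (\<lambda>xs. qhat q1 f I L xs / ennreal (Wt t xs))
       \<le> ennreal (4 * (cc * exp (2 * cc * t\<^sup>2 * real L)) ^ h)
           * min (conj_exp r) (ennreal (p / (p - 1))) * Lpow r L
           * lpnorm r UNIV (\<lambda>x. ennreal (\<bar>f x\<bar> / wt t x))
           * lpnorm (ennreal p) UNIV (\<lambda>x. ennreal (\<bar>f x\<bar> / wt t x)) ^ (h - 1)))"
proof -
  define C where "C = cc * exp (2 * cc * t\<^sup>2 * real L)"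
  have C_pos: "C > 0"
    using cc_ge by (simp add: C_def)
  have C: "cc * exp (2 * cc * t\<^sup>2 * real n) \<le> C" if "n \<le> L" for n
    using cc_ge that by (auto simp: C_def intro!: mult_left_mono)
  have bound: "lpnorm (ennreal p) {xs. length xs = h} (\<lambda>xs. qhat q1 f I L xs / ennreal (Wt t xs))
      \<le> ennreal (4 * C ^ h) * min (conj_exp r) (ennreal (p / (p - 1))) * Lpow r L
        * lpnorm r UNIV (\<lambda>x. ennreal (\<bar>f x\<bar> / wt t x))
        * lpnorm (ennreal p) UNIV (\<lambda>x. ennreal (\<bar>f x\<bar> / wt t x)) ^ (h - 1)"
    if "partition_on {..<h} I" "I \<noteq> star h" "r \<ge> 1" for I r
  proof (rule lpnorm_qhat_div_Wt_le[OF C_pos _ _ t h p that])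
    show "(\<integral>\<^sup>+y. walk_kernel q1 t n y \<partial>count_space UNIV) \<le> ennreal C" if "n \<in> {1..L}" for n
      using cc3[OF t, of n] C[of n] that by (auto simp: nn_integral_walk_kernel intro: order_trans ennreal_leI)
    show "walk_kernel q1 t n y \<le> ennreal (C / real n)" if "n \<in> {1..L}" for n y
      using cc4[OF t, of n y] C[of n] that by (intro walk_kernel_le) auto
  qed
  have "ennreal (4 * C ^ h * real L)
      = ennreal (4 * C ^ h) * min (conj_exp \<top>) (ennreal (p / (p - 1))) * Lpow \<top> L"
    using p C_pos by (simp add: mult.assoc conj_exp_Lpow_top ennreal_mult)
  with bound[of _ \<top>] bound show ?thesis
    by (simp add: C_def)
qed

end
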